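(* Let $m\in\mathbb{N}$ and let $V_n$ ($n\in\mathbb{N}$) and $V$ be 1-periodic complex-valued distributions in $H_{+}^{-m}$ such that $V_n\to V$ in $H_{+}^{-m}$ as $n\to\infty$. Then the operators $S_{\pm}^{(n)}:=S_{\pm}(V_n)$ converge to $S_{\pm}:=S_{\pm}(V)$ in the uniform resolvent sense: for $\lambda$ in the resolvent set of $S_\pm$, $$\|R(\lambda,S_{\pm}^{(n)})-R(\lambda,S_{\pm})\|\to0,\qquad n\to\infty.$$
   Context: For $s\in\mathbb{R}$, $H_{+}^{s}$ is the space of formal series $f=\sum_{k\in\mathbb{Z}}\widehat f(2k)e^{i2k\pi x}$ with $\|f\|_{H_+^s}^2=\sum_k\langle 2k\rangle^{2s}|\widehat f(2k)|^2<\infty$, and $H_{-}^{s}$ is the space of formal series $f=\sum_{k}\widehat f(2k+1)e^{i(2k+1)\pi x}$ with $\|f\|_{H_-^s}^2=\sum_k\langle 2k+1\rangle^{2s}|\widehat f(2k+1)|^2<\infty$, where $\langle k\rangle=1+|k|$; $H_\pm^0=L_2(0,1)$. $\langle\cdot,\cdot\rangle_{\pm}$ is the pairing between $H_\pm^{s}$ and $H_\pm^{-s}$ extending the $L_2(0,1)$ inner product. $D_{\pm}=-i\,d/dx$ on $H_\pm^1$, $D_\pm^{2m}=|D_\pm|^{2m}$ (multiplication by $(n\pi)^{2m}$ on the mode $e^{in\pi x}$). For $W\in H_+^{-m}$ and $u\in H_\pm^{m}$, $W(x)u=\sum_n\big(\sum_j\widehat W(n-j)\widehat u(j)\big)e^{in\pi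 x}\in H_\pm^{-m}$. For $W\in H_+^{-m}$, $S_{\pm}(W)=D_{\pm}^{2m}\dotplus W$ is the $m$-sectorial operator on $L_2(0,1)$ associated with the closed sectorial form $\langle D_{\pm}^{2m}u,v\rangle_{\pm}+\langle W(x)u,v\rangle_{\pm}$ on $H_\pm^m$; explicitly $\mathrm{Dom}(S_{\pm}(W))=\{u\in H_{\pm}^{m}\mid D_{\pm}^{2m}u+W(x)u\in L_{2}(0,1)\}$, $S_\pm(W)u=D_{\pm}^{2m}u+W(x)u$. $R(\lambda,A)=(A-\lambda I)^{-1}$ denotes the resolvent. *)

theory Defs
  imports "HOL-Analysis.Analysis"
begin

text \<open>
  Everything is expressed on the Fourier side.  A formal series in H_+^s
  (resp. H_-^s) is represented by its coefficient sequence c :: int => complex,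
  where c k is the coefficient of the mode e^{i pi (freq s k) x}, with
  freq True k = 2k (the + case) and freq False k = 2k+1 (the - case).
  Since {e^{i 2k pi x}} and {e^{i(2k+1) pi x}} are orthonormal bases of
  L_2(0,1), H_pm^0 = L_2(0,1) is isometrically identified with l_2(Z).
  A potential W in H_+^{-m} is represented by w k = coefficient of e^{i 2k pi x}.
\<close>

definition freq :: "bool \<Rightarrow> int \<Rightarrow> int" where
  "freq pl k = (if pl then 2 * k else 2 * k + 1)"

definition bracket :: "int \<Rightarrow> real" where
  "bracket k = 1 + real_of_int \<bar>k\<bar>"

definition in_H :: "bool \<Rightarrow> real \<Rightarrow> (int \<Rightarrow> complex) \<Rightarrow> bool" where
  "in_H pl r u \<longleftrightarrow>
     (\<lambda>k. bracket (freq pl k) powr (2 * r) * (cmod (u k))\<^sup>2) summable_on (UNIV :: int set)"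

definition Hnorm :: "bool \<Rightarrow> real \<Rightarrow> (int \<Rightarrow> complex) \<Rightarrow> real" where
  "Hnorm pl r u = sqrt (\<Sum>\<^sub>\<infinity>k. bracket (freq pl k) powr (2 * r) * (cmod (u k))\<^sup>2)"

abbreviation L2 :: "bool \<Rightarrow> (int \<Rightarrow> complex) \<Rightarrow> bool" where
  "L2 pl u \<equiv> in_H pl 0 u"

abbreviation L2norm :: "bool \<Rightarrow> (int \<Rightarrow> complex) \<Rightarrow> real" where
  "L2norm pl u \<equiv> Hnorm pl 0 u"

text \<open>multiplication W(x)u: (Wu)^(n) = sum_j W^(n-j) u^(j); in coefficient
  indexing freq n - freq j = 2(n-j)\<close>
definition pot_mult :: "(int \<Rightarrow> complex) \<Rightarrow> (int \<Rightarrow> complex) \<Rightarrow> (int \<Rightarrow> complex)" where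
  "pot_mult w u = (\<lambda>n. \<Sum>\<^sub>\<infinity>j. w (n - j) * u j)"

definition S_expr :: "bool \<Rightarrow> nat \<Rightarrow> (int \<Rightarrow> complex) \<Rightarrow> (int \<Rightarrow> complex) \<Rightarrow> (int \<Rightarrow> complex)" where
  "S_expr pl m w u = (\<lambda>k. complex_of_real ((pi * real_of_int (freq pl k)) ^ (2 * m)) * u k
                          + pot_mult w u k)"

definition S_dom :: "bool \<Rightarrow> nat \<Rightarrow> (int \<Rightarrow> complex) \<Rightarrow> (int \<Rightarrow> complex) set" where
  "S_dom pl m w = {u. in_H pl (real m) u \<and> L2 pl (S_expr pl m w u)}"

definition resolvent_set :: "bool \<Rightarrow> nat \<Rightarrow> (int \<Rightarrow> complex) \<Rightarrow> complex set" where
  "resolvent_set pl m w = {lam.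
      (\<forall>f. L2 pl f \<longrightarrow> (\<exists>!u. u \<in> S_dom pl m w \<and> (\<lambda>k. S_expr pl m w u k - lam * u k) = f)) \<and>
      (\<exists>C. \<forall>f u. L2 pl f \<longrightarrow> u \<in> S_dom pl m w \<longrightarrow> (\<lambda>k. S_expr pl m w u k - lam * u k) = f
                \<longrightarrow> L2norm pl u \<le> C * L2norm pl f)}"

definition resolvent :: "bool \<Rightarrow> nat \<Rightarrow> (int \<Rightarrow> complex) \<Rightarrow> complex \<Rightarrow> (int \<Rightarrow> complex) \<Rightarrow> (int \<Rightarrow> complex)" where
  "resolvent pl m w lam f = (THE u. u \<in> S_dom pl m w \<and> (\<lambda>k. S_expr pl m w u k - lam * u k) = f)"

definition opnorm_diff :: "bool \<Rightarrow> ((int \<Rightarrow> complex) \<Rightarrow> (int \<Rightarrow> complex)) \<Rightarrow> ((int \<Rightarrow> complex) \<Rightarrow> (int \<Rightarrow> complex)) \<Rightarrow> real" where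
  "opnorm_diff pl A B = Sup {L2norm pl (\<lambda>k. A f k - B f k) | f. L2 pl f \<and> L2norm pl f \<le> 1}"

end

theory Submission
  imports Defs
begin

text \<open>On the Fourier side \<open>H\<^sup>s\<^sub>\<plusminus>\<close> are weighted \<open>l\<^sup>2\<close> spaces over \<open>\<int>\<close> and \<open>W(x)u\<close> is a discrete
  convolution. For \<open>m \<ge> 1\<close> multiplication by \<open>X \<in> H\<^sup>-\<^sup>m\<^sub>+\<close> maps \<open>H\<^sup>m\<close> boundedly into \<open>H\<^sup>-\<^sup>m\<close>,
  while \<open>(D\<^sup>2\<^sup>m + \<mu>)\<inverse>\<close> maps \<open>H\<^sup>-\<^sup>m\<close> into \<open>H\<^sup>m\<close> with norm at most \<open>4\<^sup>m\<close> and \<open>L\<^sub>2\<close> into \<open>H\<^sup>m\<close> with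
  norm at most \<open>2\<^sup>m/\<surd>\<mu>\<close>. Splitting \<open>W\<close> into finitely many low modes and a tail of small
  \<open>H\<^sup>-\<^sup>m\<close>-norm and taking \<open>\<mu>\<close> large, \<open>(D\<^sup>2\<^sup>m + \<mu>)\<inverse>X\<close> becomes a contraction of \<open>H\<^sup>m\<close> for all
  \<open>X\<close> near \<open>W\<close>, so \<open>S(X) + \<mu>\<close> has an inverse \<open>T\<^sub>X\<close>, and \<open>T\<^sub>X - T\<^sub>W : L\<^sub>2 \<rightarrow> H\<^sup>m\<close> has
  norm \<open>O(\<parallel>X - W\<parallel>)\<close>, where \<open>X - W\<close> is measured in \<open>H\<^sup>-\<^sup>m\<close>. With \<open>\<nu> = \<lambda> + \<mu>\<close>,
  the equation \<open>(S(X) - \<lambda>) v = f\<close> is the fixed-point equation of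
  \<open>v \<mapsto> v - (I + \<nu> R(\<lambda>, S(W))) (v - T\<^sub>X (f + \<nu> v))\<close>, a contraction of \<open>L\<^sub>2\<close> for \<open>X\<close> near \<open>W\<close>; the contraction principle gives \<open>\<lambda> \<in> \<rho>(S(X))\<close> and
  \<open>\<parallel>R(\<lambda>, S(X)) - R(\<lambda>, S(W))\<parallel> = O(\<parallel>X - W\<parallel>)\<close>.\<close>

section \<open>Weighted \<open>l\<^sup>2\<close> spaces over the integers\<close>

definition wl2 :: "(int \<Rightarrow> real) \<Rightarrow> (int \<Rightarrow> complex) \<Rightarrow> bool" where
  "wl2 \<omega> u \<longleftrightarrow> (\<lambda>k. \<omega> k * (cmod (u k))\<^sup>2) summable_on UNIV"

definition wl2_norm :: "(int \<Rightarrow> real) \<Rightarrow> (int \<Rightarrow> complex) \<Rightarrow> real" where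
  "wl2_norm \<omega> u = sqrt (\<Sum>\<^sub>\<infinity>k. \<omega> k * (cmod (u k))\<^sup>2)"

lemma wl2_norm_nonneg: "(\<And>k. \<omega> k \<ge> 0) \<Longrightarrow> 0 \<le> wl2_norm \<omega> u"
  unfolding wl2_norm_def by (intro real_sqrt_ge_zero infsum_nonneg) simp

lemma wl2_partial_sum_le:
  assumes pos: "\<And>k. \<omega> k \<ge> 0" and "wl2 \<omega> u" "finite F"
  shows "(\<Sum>k\<in>F. \<omega> k * (cmod (u k))\<^sup>2) \<le> (wl2_norm \<omega> u)\<^sup>2"
proof -
  have nn: "\<And>k. \<omega> k * (cmod (u k))\<^sup>2 \<ge> 0" using pos by simp
  have "(\<Sum>k\<in>F. \<omega> k * (cmod (u k))\<^sup>2) \<le> (\<Sum>\<^sub>\<infinity>k. \<omega> k * (cmod (u k))\<^sup>2)"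
    by (rule finite_sum_le_infsum) (use assms nn in \<open>auto simp: wl2_def\<close>)
  also have "\<dots> = (wl2_norm \<omega> u)\<^sup>2" unfolding wl2_norm_def
    by (simp add: infsum_nonneg nn)
  finally show ?thesis .
qed

lemma wl2_bounded_partial_sums:
  assumes pos: "\<And>k. \<omega> k \<ge> 0" and "B \<ge> 0"
    and bound: "\<And>F. finite F \<Longrightarrow> (\<Sum>k\<in>F. \<omega> k * (cmod (u k))\<^sup>2) \<le> B\<^sup>2"
  shows "wl2 \<omega> u" "wl2_norm \<omega> u \<le> B"
proof -
  have nn: "\<And>k. \<omega> k * (cmod (u k))\<^sup>2 \<ge> 0" using pos by simp
  show s: "wl2 \<omega> u" unfolding wl2_def
    by (rule nonneg_bdd_above_summable_on) (use nn bound in \<open>auto intro!: bdd_aboveI2\<close>)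
  have "(\<Sum>\<^sub>\<infinity>k. \<omega> k * (cmod (u k))\<^sup>2) \<le> B\<^sup>2"
    by (rule infsum_le_finite_sums) (use s bound in \<open>auto simp: wl2_def\<close>)
  then show "wl2_norm \<omega> u \<le> B" unfolding wl2_norm_def
    using \<open>B \<ge> 0\<close> by (simp add: real_sqrt_le_iff real_le_lsqrt infsum_nonneg nn)
qed

lemma wl2_dominated:
  assumes pos1: "\<And>k. \<omega>1 k \<ge> 0" and pos2: "\<And>k. \<omega>2 k \<ge> 0" and v: "wl2 \<omega>2 v" and "c \<ge> 0"
    and le: "\<And>k. \<omega>1 k * (cmod (u k))\<^sup>2 \<le> c\<^sup>2 * (\<omega>2 k * (cmod (v k))\<^sup>2)"
  shows "wl2 \<omega>1 u" "wl2_norm \<omega>1 u \<le> c * wl2_norm \<omega>2 v"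
proof -
  have bound: "(\<Sum>k\<in>F. \<omega>1 k * (cmod (u k))\<^sup>2) \<le> (c * wl2_norm \<omega>2 v)\<^sup>2" if "finite F" for F
  proof -
    have "(\<Sum>k\<in>F. \<omega>1 k * (cmod (u k))\<^sup>2) \<le> c\<^sup>2 * (\<Sum>k\<in>F. \<omega>2 k * (cmod (v k))\<^sup>2)"
      unfolding sum_distrib_left by (rule sum_mono) (rule le)
    also have "\<dots> \<le> c\<^sup>2 * (wl2_norm \<omega>2 v)\<^sup>2"
      by (rule mult_left_mono[OF wl2_partial_sum_le[OF pos2 v that]]) simp
    finally show ?thesis by (simp add: power_mult_distrib)
  qed
  have "c * wl2_norm \<omega>2 v \<ge> 0" using \<open>c \<ge> 0\<close> wl2_norm_nonneg[OF pos2] by simp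
  from wl2_bounded_partial_sums[OF pos1 this bound]
  show "wl2 \<omega>1 u" "wl2_norm \<omega>1 u \<le> c * wl2_norm \<omega>2 v" by simp_all
qed

lemma wl2_add:
  assumes pos: "\<And>k. \<omega> k \<ge> 0" and u: "wl2 \<omega> u" and v: "wl2 \<omega> v"
  shows "wl2 \<omega> (\<lambda>k. u k + v k)" "wl2_norm \<omega> (\<lambda>k. u k + v k) \<le> wl2_norm \<omega> u + wl2_norm \<omega> v"
proof -
  have L2_set_eq: "L2_set (\<lambda>k. sqrt (\<omega> k) * cmod (w k)) F = sqrt (\<Sum>k\<in>F. \<omega> k * (cmod (w k))\<^sup>2)" for w F
    unfolding L2_set_def using pos by (simp add: power_mult_distrib)
  have partial: "sqrt (\<Sum>k\<in>F. \<omega> k * (cmod (w k))\<^sup>2) \<le> wl2_norm \<omega> w" if "wl2 \<omega> w" "finite F" for w F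
    using real_sqrt_le_mono[OF wl2_partial_sum_le[OF pos that]] wl2_norm_nonneg[OF pos] by simp
  have bound: "(\<Sum>k\<in>F. \<omega> k * (cmod (u k + v k))\<^sup>2) \<le> (wl2_norm \<omega> u + wl2_norm \<omega> v)\<^sup>2"
    if F: "finite F" for F
  proof -
    have "L2_set (\<lambda>k. sqrt (\<omega> k) * cmod (u k + v k)) F
        \<le> L2_set (\<lambda>k. sqrt (\<omega> k) * cmod (u k) + sqrt (\<omega> k) * cmod (v k)) F"
    proof (rule L2_set_mono)
      fix i
      have "sqrt (\<omega> i) * cmod (u i + v i) \<le> sqrt (\<omega> i) * (cmod (u i) + cmod (v i))"
        by (rule mult_left_mono) (auto simp: norm_triangle_ineq pos)
      then show "sqrt (\<omega> i) * cmod (u i + v i) \<le> sqrt (\<omega> i) * cmod (u i) + sqrt (\<omega> i) * cmod (v i)"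
        by (simp add: distrib_left)
    qed (simp add: pos)
    also have "\<dots> \<le> L2_set (\<lambda>k. sqrt (\<omega> k) * cmod (u k)) F + L2_set (\<lambda>k. sqrt (\<omega> k) * cmod (v k)) F"
      by (rule L2_set_triangle_ineq)
    also have "\<dots> \<le> wl2_norm \<omega> u + wl2_norm \<omega> v"
      unfolding L2_set_eq by (intro add_mono partial u v F)
    finally have "sqrt (\<Sum>k\<in>F. \<omega> k * (cmod (u k + v k))\<^sup>2) \<le> wl2_norm \<omega> u + wl2_norm \<omega> v"
      by (simp only: L2_set_eq)
    moreover have "(\<Sum>k\<in>F. \<omega> k * (cmod (u k + v k))\<^sup>2) \<ge> 0"
      by (intro sum_nonneg mult_nonneg_nonneg) (simp_all add: pos)
    ultimately show ?thesis by (metis real_sqrt_pow2 power_mono real_sqrt_ge_zero)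
  qed
  have "wl2_norm \<omega> u + wl2_norm \<omega> v \<ge> 0" using wl2_norm_nonneg[OF pos] by (simp add: add_nonneg_nonneg)
  from wl2_bounded_partial_sums[OF pos this bound]
  show "wl2 \<omega> (\<lambda>k. u k + v k)" "wl2_norm \<omega> (\<lambda>k. u k + v k) \<le> wl2_norm \<omega> u + wl2_norm \<omega> v"
    by simp_all
qed

lemma wl2_zero: "wl2 \<omega> (\<lambda>_. 0)" "wl2_norm \<omega> (\<lambda>_. 0) = 0"
  by (simp_all add: wl2_def wl2_norm_def)

lemma wl2_cmult:
  assumes "wl2 \<omega> u" "\<And>k. \<omega> k \<ge> 0"
  shows "wl2 \<omega> (\<lambda>k. c * u k)" "wl2_norm \<omega> (\<lambda>k. c * u k) = cmod c * wl2_norm \<omega> u"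
proof -
  have e: "(\<lambda>k. \<omega> k * (cmod (c * u k))\<^sup>2) = (\<lambda>k. (cmod c)\<^sup>2 * (\<omega> k * (cmod (u k))\<^sup>2))"
    by (simp add: norm_mult power_mult_distrib mult_ac)
  show "wl2 \<omega> (\<lambda>k. c * u k)" using assms(1) unfolding wl2_def e by (rule summable_on_cmult_right)
  show "wl2_norm \<omega> (\<lambda>k. c * u k) = cmod c * wl2_norm \<omega> u"
    unfolding wl2_norm_def e by (simp add: infsum_cmult_right' real_sqrt_mult)
qed

lemma wl2_uminus: "wl2 \<omega> (\<lambda>k. - u k) = wl2 \<omega> u" "wl2_norm \<omega> (\<lambda>k. - u k) = wl2_norm \<omega> u"
  by (simp_all add: wl2_def wl2_norm_def)

lemma wl2_diff:
  assumes pos: "\<And>k. \<omega> k \<ge> 0" and u: "wl2 \<omega> u" and v: "wl2 \<omega> v"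
  shows "wl2 \<omega> (\<lambda>k. u k - v k)" "wl2_norm \<omega> (\<lambda>k. u k - v k) \<le> wl2_norm \<omega> u + wl2_norm \<omega> v"
  using wl2_add[OF pos u, of "\<lambda>k. - v k"] v by (simp_all add: wl2_uminus)

lemma wl2_norm_diff_commute: "wl2_norm \<omega> (\<lambda>k. u k - v k) = wl2_norm \<omega> (\<lambda>k. v k - u k)"
  unfolding wl2_norm_def by (simp add: norm_minus_commute)

lemma wl2_norm_diff_triangle:
  assumes pos: "\<And>k. \<omega> k \<ge> 0" and "wl2 \<omega> a" "wl2 \<omega> b" "wl2 \<omega> c"
  shows "wl2_norm \<omega> (\<lambda>k. a k - b k) \<le> wl2_norm \<omega> (\<lambda>k. a k - c k) + wl2_norm \<omega> (\<lambda>k. c k - b k)"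
  using wl2_add(2)[OF pos wl2_diff(1)[OF pos assms(2,4)] wl2_diff(1)[OF pos assms(4,3)]] by simp

lemma wl2_coeff_le:
  assumes pos: "\<And>k. \<omega> k > 0" and "wl2 \<omega> u"
  shows "cmod (u k) \<le> wl2_norm \<omega> u / sqrt (\<omega> k)"
proof -
  have pos': "\<And>k. \<omega> k \<ge> 0" using pos less_imp_le by blast
  have "\<omega> k * (cmod (u k))\<^sup>2 \<le> (wl2_norm \<omega> u)\<^sup>2"
    using wl2_partial_sum_le[OF pos' assms(2), of "{k}"] by simp
  then have "sqrt (\<omega> k * (cmod (u k))\<^sup>2) \<le> sqrt ((wl2_norm \<omega> u)\<^sup>2)" by (rule real_sqrt_le_mono)
  then have "sqrt (\<omega> k) * cmod (u k) \<le> wl2_norm \<omega> u"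
    using wl2_norm_nonneg[OF pos'] by (simp add: real_sqrt_mult)
  then show ?thesis using pos[of k] by (simp add: field_simps)
qed

lemma wl2_eqI:
  assumes pos: "\<And>k. \<omega> k > 0" and "wl2 \<omega> (\<lambda>k. u k - v k)" "wl2_norm \<omega> (\<lambda>k. u k - v k) \<le> 0"
  shows "u = v"
proof
  fix k
  have "cmod (u k - v k) \<le> wl2_norm \<omega> (\<lambda>k. u k - v k) / sqrt (\<omega> k)"
    by (rule wl2_coeff_le[OF pos assms(2)])
  also have "\<dots> \<le> 0" using assms(3) pos[of k] by (simp add: divide_nonpos_pos)
  finally show "u k = v k" by simp
qed

lemma wl2_Cauchy_coeff:
  assumes pos: "\<And>k. \<omega> k > 0" and s: "\<And>i. wl2 \<omega> (s i)"
    and cauchy: "\<And>k l. k \<le> l \<Longrightarrow> wl2_norm \<omega> (\<lambda>j. s l j - s k j) \<le> E k" and E: "E \<longlonglongrightarrow> 0"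
  shows "Cauchy (\<lambda>i. s i j)"
proof (rule metric_CauchyI)
  have pos': "\<And>k. \<omega> k \<ge> 0" using pos less_imp_le by blast
  fix e :: real assume "e > 0"
  have "(\<lambda>k. E k / sqrt (\<omega> j)) \<longlonglongrightarrow> 0 / sqrt (\<omega> j)"
    by (intro tendsto_divide E tendsto_const) (use pos[of j] in auto)
  then have "\<forall>\<^sub>F k in sequentially. E k / sqrt (\<omega> j) < e / 2"
    using \<open>e > 0\<close> by (intro order_tendstoD) auto
  then obtain M where M: "\<And>k. k \<ge> M \<Longrightarrow> E k / sqrt (\<omega> j) < e / 2"
    by (auto simp: eventually_sequentially)
  have near: "dist (s a j) (s M j) < e / 2" if "a \<ge> M" for a
  proof -
    have "dist (s a j) (s M j) \<le> wl2_norm \<omega> (\<lambda>j. s a j - s M j) / sqrt (\<omega> j)"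
      unfolding dist_norm by (rule wl2_coeff_le[OF pos wl2_diff(1)[OF pos' s s]])
    also have "\<dots> \<le> E M / sqrt (\<omega> j)"
      using cauchy[OF that] pos[of j] by (simp add: divide_right_mono)
    also have "\<dots> < e / 2" by (rule M) simp
    finally show ?thesis .
  qed
  show "\<exists>M. \<forall>a\<ge>M. \<forall>b\<ge>M. dist (s a j) (s b j) < e"
    by (intro exI allI impI dist_triangle_half_l[OF near near])
qed

lemma wl2_complete:
  assumes pos: "\<And>k. \<omega> k > 0" and s: "\<And>i. wl2 \<omega> (s i)"
    and cauchy: "\<And>k l. k \<le> l \<Longrightarrow> wl2_norm \<omega> (\<lambda>j. s l j - s k j) \<le> E k" and E: "E \<longlonglongrightarrow> 0"
  shows "\<exists>U. wl2 \<omega> U \<and> (\<forall>k. wl2_norm \<omega> (\<lambda>j. U j - s k j) \<le> E k)"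
proof -
  have pos': "\<And>k. \<omega> k \<ge> 0" using pos less_imp_le by blast
  have E0: "E k \<ge> 0" for k
    using order.trans[OF wl2_norm_nonneg[OF pos'] cauchy[OF order_refl]] .
  define U where "U j = lim (\<lambda>i. s i j)" for j
  have U: "(\<lambda>i. s i j) \<longlonglongrightarrow> U j" for j
    unfolding U_def using wl2_Cauchy_coeff[OF pos s cauchy E]
    by (simp add: Cauchy_convergent_iff convergent_LIMSEQ_iff)
  have close: "wl2 \<omega> (\<lambda>j. U j - s k j)" "wl2_norm \<omega> (\<lambda>j. U j - s k j) \<le> E k" for k
  proof -
    have "(\<Sum>j\<in>F. \<omega> j * (cmod (U j - s k j))\<^sup>2) \<le> (E k)\<^sup>2" if F: "finite F" for F
    proof (rule LIMSEQ_le_const2)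
      show "(\<lambda>l. \<Sum>j\<in>F. \<omega> j * (cmod (s l j - s k j))\<^sup>2) \<longlonglongrightarrow> (\<Sum>j\<in>F. \<omega> j * (cmod (U j - s k j))\<^sup>2)"
        by (intro tendsto_intros U)
      show "\<exists>N. \<forall>l\<ge>N. (\<Sum>j\<in>F. \<omega> j * (cmod (s l j - s k j))\<^sup>2) \<le> (E k)\<^sup>2"
      proof (intro exI[of _ k] allI impI)
        fix l assume "k \<le> l"
        show "(\<Sum>j\<in>F. \<omega> j * (cmod (s l j - s k j))\<^sup>2) \<le> (E k)\<^sup>2"
          using wl2_partial_sum_le[OF pos' wl2_diff(1)[OF pos' s s] F, of l k]
            power_mono[OF cauchy[OF \<open>k \<le> l\<close>] wl2_norm_nonneg[OF pos'], of 2] by linarith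
      qed
    qed
    from wl2_bounded_partial_sums[OF pos' E0 this]
    show "wl2 \<omega> (\<lambda>j. U j - s k j)" "wl2_norm \<omega> (\<lambda>j. U j - s k j) \<le> E k" by simp_all
  qed
  have "wl2 \<omega> U" using wl2_add(1)[OF pos' close(1) s, of 0 0] by simp
  with close(2) show ?thesis by blast
qed

lemma wl2_iterates_Cauchy:
  fixes \<Phi> :: "(int \<Rightarrow> complex) \<Rightarrow> (int \<Rightarrow> complex)"
  assumes pos: "\<And>k. \<omega> k \<ge> 0" and c: "0 \<le> c" "c < 1"
    and maps: "\<And>u. wl2 \<omega> u \<Longrightarrow> wl2 \<omega> (\<Phi> u)"
    and lip: "\<And>u v. wl2 \<omega> u \<Longrightarrow> wl2 \<omega> v \<Longrightarrow>
                wl2_norm \<omega> (\<lambda>k. \<Phi> u k - \<Phi> v k) \<le> c * wl2_norm \<omega> (\<lambda>k. u k - v k)"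
    and u0: "wl2 \<omega> u0" and "k \<le> l"
  shows "wl2_norm \<omega> (\<lambda>j. (\<Phi> ^^ l) u0 j - (\<Phi> ^^ k) u0 j)
           \<le> wl2_norm \<omega> (\<lambda>j. \<Phi> u0 j - u0 j) * c ^ k / (1 - c)"
proof -
  define s where "s i = (\<Phi> ^^ i) u0" for i
  define d where "d = wl2_norm \<omega> (\<lambda>j. \<Phi> u0 j - u0 j)"
  have s: "wl2 \<omega> (s i)" for i by (induction i) (simp_all add: s_def u0 maps)
  have d: "d \<ge> 0" unfolding d_def by (rule wl2_norm_nonneg[OF pos])
  have step: "wl2_norm \<omega> (\<lambda>j. s (Suc i) j - s i j) \<le> c ^ i * d" for i
  proof (induction i)
    case (Suc i)
    have "wl2_norm \<omega> (\<lambda>j. s (Suc (Suc i)) j - s (Suc i) j) \<le> c * wl2_norm \<omega> (\<lambda>j. s (Suc i) j - s i j)"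
      using lip[OF s[of "Suc i"] s[of i]] by (simp add: s_def)
    also have "\<dots> \<le> c * (c ^ i * d)" by (rule mult_left_mono[OF Suc c(1)])
    finally show ?case by simp
  qed (simp add: s_def d_def)
  have geometric: "wl2_norm \<omega> (\<lambda>j. s (k + q) j - s k j) \<le> d * (c ^ k - c ^ (k + q)) / (1 - c)" for q
  proof (induction q)
    case (Suc q)
    have "wl2_norm \<omega> (\<lambda>j. s (k + Suc q) j - s k j)
        \<le> wl2_norm \<omega> (\<lambda>j. s (k + Suc q) j - s (k + q) j) + wl2_norm \<omega> (\<lambda>j. s (k + q) j - s k j)"
      by (rule wl2_norm_diff_triangle[OF pos s s s])
    also have "\<dots> \<le> c ^ (k + q) * d + d * (c ^ k - c ^ (k + q)) / (1 - c)"
      using step[of "k + q"] Suc by simp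
    also have "\<dots> = d * (c ^ k - c ^ (k + Suc q)) / (1 - c)"
      using c by (simp add: field_simps)
    finally show ?case .
  qed (simp add: wl2_zero)
  obtain q where "l = k + q" using \<open>k \<le> l\<close> le_Suc_ex by blast
  moreover have "d * (c ^ k - c ^ (k + q)) / (1 - c) \<le> d * c ^ k / (1 - c)"
    using c d by (intro divide_right_mono mult_left_mono) auto
  ultimately have "wl2_norm \<omega> (\<lambda>j. s l j - s k j) \<le> d * c ^ k / (1 - c)"
    using geometric[of q] by simp
  then show ?thesis by (simp only: s_def d_def)
qed

lemma wl2_limit_fixed:
  fixes \<Phi> :: "(int \<Rightarrow> complex) \<Rightarrow> (int \<Rightarrow> complex)"
  assumes pos: "\<And>k. \<omega> k > 0" and "0 \<le> c"
    and maps: "\<And>u. wl2 \<omega> u \<Longrightarrow> wl2 \<omega> (\<Phi> u)"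
    and lip: "\<And>u v. wl2 \<omega> u \<Longrightarrow> wl2 \<omega> v \<Longrightarrow>
                wl2_norm \<omega> (\<lambda>k. \<Phi> u k - \<Phi> v k) \<le> c * wl2_norm \<omega> (\<lambda>k. u k - v k)"
    and s: "\<And>i. wl2 \<omega> (s i)" and s_Suc: "\<And>i. s (Suc i) = \<Phi> (s i)"
    and U: "wl2 \<omega> U" and UE: "\<And>k. wl2_norm \<omega> (\<lambda>j. U j - s k j) \<le> E k" and E: "E \<longlonglongrightarrow> 0"
  shows "\<Phi> U = U"
proof -
  have pos': "\<And>k. \<omega> k \<ge> 0" using pos less_imp_le by blast
  have bound: "wl2_norm \<omega> (\<lambda>j. \<Phi> U j - U j) \<le> c * E k + E (Suc k)" for k
  proof -
    have "wl2_norm \<omega> (\<lambda>j. \<Phi> U j - U j)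
        \<le> wl2_norm \<omega> (\<lambda>j. \<Phi> U j - \<Phi> (s k) j) + wl2_norm \<omega> (\<lambda>j. \<Phi> (s k) j - U j)"
      by (rule wl2_norm_diff_triangle[OF pos' maps[OF U] U maps[OF s]])
    also have "\<dots> \<le> c * wl2_norm \<omega> (\<lambda>j. U j - s k j) + wl2_norm \<omega> (\<lambda>j. U j - s (Suc k) j)"
      using lip[OF U s[of k]] wl2_norm_diff_commute[of \<omega> "\<Phi> (s k)" U] by (simp add: s_Suc)
    also have "\<dots> \<le> c * E k + E (Suc k)"
      using UE[of k] UE[of "Suc k"] \<open>0 \<le> c\<close> by (intro add_mono mult_left_mono) auto
    finally show ?thesis .
  qed
  have "(\<lambda>k. c * E k + E (Suc k)) \<longlonglongrightarrow> c * 0 + 0"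
    by (intro tendsto_intros E filterlim_compose[OF E filterlim_Suc])
  then have "wl2_norm \<omega> (\<lambda>j. \<Phi> U j - U j) \<le> c * 0 + 0"
    by (rule tendsto_lowerbound) (simp_all add: bound always_eventually)
  then show ?thesis by (intro wl2_eqI[OF pos wl2_diff(1)[OF pos' maps[OF U] U]]) simp
qed

lemma wl2_contraction_fixpoint:
  fixes \<Phi> :: "(int \<Rightarrow> complex) \<Rightarrow> (int \<Rightarrow> complex)"
  assumes pos: "\<And>k. \<omega> k > 0" and c: "0 \<le> c" "c < 1"
    and maps: "\<And>u. wl2 \<omega> u \<Longrightarrow> wl2 \<omega> (\<Phi> u)"
    and lip: "\<And>u v. wl2 \<omega> u \<Longrightarrow> wl2 \<omega> v \<Longrightarrow>
                wl2_norm \<omega> (\<lambda>k. \<Phi> u k - \<Phi> v k) \<le> c * wl2_norm \<omega> (\<lambda>k. u k - v k)"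
  shows "\<exists>!u. wl2 \<omega> u \<and> \<Phi> u = u"
proof -
  have pos': "\<And>k. \<omega> k \<ge> 0" using pos less_imp_le by blast
  define s where "s i = (\<Phi> ^^ i) (\<lambda>_. 0)" for i
  have s_Suc: "s (Suc i) = \<Phi> (s i)" for i by (simp add: s_def)
  have s: "wl2 \<omega> (s i)" for i
    by (induction i) (simp_all add: s_def wl2_zero maps)
  define d where "d = wl2_norm \<omega> (\<lambda>j. \<Phi> (\<lambda>_. 0) j - 0)"
  define E where "E k = d * c ^ k / (1 - c)" for k
  have cauchy: "wl2_norm \<omega> (\<lambda>j. s l j - s k j) \<le> E k" if "k \<le> l" for k l
    unfolding s_def d_def E_def by (rule wl2_iterates_Cauchy[OF pos' c maps lip wl2_zero(1) that])
  have "(\<lambda>k. d / (1 - c) * c ^ k) \<longlonglongrightarrow> d / (1 - c) * 0"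
    by (intro tendsto_mult tendsto_const LIMSEQ_power_zero) (use c in auto)
  then have E: "E \<longlonglongrightarrow> 0" unfolding E_def by (simp add: field_simps)
  obtain U where U: "wl2 \<omega> U" and UE: "\<And>k. wl2_norm \<omega> (\<lambda>j. U j - s k j) \<le> E k"
    using wl2_complete[OF pos s cauchy E] by blast
  have fixed: "\<Phi> U = U"
    by (rule wl2_limit_fixed[OF pos c(1) maps lip s s_Suc U UE E])
  have unique: "v = U" if v: "wl2 \<omega> v" "\<Phi> v = v" for v
  proof (rule wl2_eqI[OF pos wl2_diff(1)[OF pos' v(1) U]])
    have "wl2_norm \<omega> (\<lambda>k. v k - U k) \<le> c * wl2_norm \<omega> (\<lambda>k. v k - U k)"
      using lip[OF v(1) U] v(2) fixed by simp
    then have "(1 - c) * wl2_norm \<omega> (\<lambda>k. v k - U k) \<le> 0" by (simp add: algebra_simps)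
    then show "wl2_norm \<omega> (\<lambda>k. v k - U k) \<le> 0" using c by (simp add: mult_le_0_iff)
  qed
  show ?thesis using U fixed unique by blast
qed

section \<open>Sobolev weights\<close>

definition brk :: "bool \<Rightarrow> int \<Rightarrow> real" where
  "brk pl k = bracket (freq pl k)"

definition Hpos_wt :: "bool \<Rightarrow> nat \<Rightarrow> int \<Rightarrow> real" where
  "Hpos_wt pl m k = brk pl k ^ (2 * m)"

definition Hneg_wt :: "bool \<Rightarrow> nat \<Rightarrow> int \<Rightarrow> real" where
  "Hneg_wt pl m k = 1 / brk pl k ^ (2 * m)"

definition L2_wt :: "int \<Rightarrow> real" where
  "L2_wt k = 1"

lemma brk_ge_1: "brk pl k \<ge> 1"
  by (simp add: brk_def bracket_def)

lemma brk_pos: "brk pl k > 0"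
  using brk_ge_1[of pl k] by linarith

lemma brk_ne_0 [simp]: "brk pl k \<noteq> 0"
  using brk_pos[of pl k] by simp

lemma brk_ge_bracket: "brk pl k \<ge> 1 + \<bar>real_of_int k\<bar>"
proof -
  have "\<bar>k\<bar> \<le> \<bar>freq pl k\<bar>" by (simp add: freq_def) arith
  then have "\<bar>real_of_int k\<bar> \<le> \<bar>real_of_int (freq pl k)\<bar>" by (metis of_int_abs of_int_le_iff)
  then show ?thesis by (simp add: brk_def bracket_def)
qed

lemma bracket_ne_0 [simp]: "bracket k \<noteq> 0"
  by (simp add: bracket_def)

lemma Hpos_wt_pos: "Hpos_wt pl m k > 0" by (simp add: Hpos_wt_def brk_pos)
lemma Hneg_wt_pos: "Hneg_wt pl m k > 0" by (simp add: Hneg_wt_def brk_pos)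
lemma L2_wt_pos: "L2_wt k > 0" by (simp add: L2_wt_def)
lemma Hpos_wt_nonneg: "Hpos_wt pl m k \<ge> 0" by (simp add: less_imp_le Hpos_wt_pos)
lemma Hneg_wt_nonneg: "Hneg_wt pl m k \<ge> 0" by (simp add: less_imp_le Hneg_wt_pos)
lemma L2_wt_nonneg: "L2_wt k \<ge> 0" by (simp add: L2_wt_def)
lemma Hpos_wt_ge_1: "Hpos_wt pl m k \<ge> 1" unfolding Hpos_wt_def using brk_ge_1 one_le_power by blast

lemma bracket_powr_nat: "bracket (freq pl k) powr (2 * real m) = Hpos_wt pl m k"
proof -
  have "bracket (freq pl k) powr (2 * real m) = bracket (freq pl k) powr (real (2 * m))" by simp
  also have "\<dots> = Hpos_wt pl m k" using brk_pos[of pl k] by (simp only: powr_realpow Hpos_wt_def brk_def)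
  finally show ?thesis .
qed

lemma in_H_nat: "in_H pl (real m) u = wl2 (Hpos_wt pl m) u" "Hnorm pl (real m) u = wl2_norm (Hpos_wt pl m) u"
  by (simp_all add: in_H_def Hnorm_def wl2_def wl2_norm_def bracket_powr_nat)

lemma in_H_neg_nat: "in_H pl (- real m) u = wl2 (Hneg_wt pl m) u" "Hnorm pl (- real m) u = wl2_norm (Hneg_wt pl m) u"
proof -
  have "bracket (freq pl k) powr (2 * - real m) = Hneg_wt pl m k" for k
    by (simp add: powr_minus bracket_powr_nat Hneg_wt_def Hpos_wt_def divide_inverse)
  then show "in_H pl (- real m) u = wl2 (Hneg_wt pl m) u" "Hnorm pl (- real m) u = wl2_norm (Hneg_wt pl m) u"
    by (simp_all add: in_H_def Hnorm_def wl2_def wl2_norm_def)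
qed

lemma in_H_0: "in_H pl 0 u = wl2 L2_wt u" "Hnorm pl 0 u = wl2_norm L2_wt u"
  by (simp_all add: in_H_def Hnorm_def wl2_def wl2_norm_def L2_wt_def)

lemma Hpos_imp_L2:
  assumes "wl2 (Hpos_wt pl m) u"
  shows "wl2 L2_wt u \<and> wl2_norm L2_wt u \<le> wl2_norm (Hpos_wt pl m) u"
proof -
  have "L2_wt k * (cmod (u k))\<^sup>2 \<le> 1\<^sup>2 * (Hpos_wt pl m k * (cmod (u k))\<^sup>2)" for k
    using mult_right_mono[OF Hpos_wt_ge_1[of pl m k], of "(cmod (u k))\<^sup>2"] by (simp add: L2_wt_def)
  then show ?thesis using wl2_dominated[OF L2_wt_nonneg Hpos_wt_nonneg assms, of 1] by simp
qed

lemma L2_imp_Hneg: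
  assumes "wl2 L2_wt u"
  shows "wl2 (Hneg_wt pl m) u \<and> wl2_norm (Hneg_wt pl m) u \<le> wl2_norm L2_wt u"
proof -
  have "Hneg_wt pl m k * (cmod (u k))\<^sup>2 \<le> 1\<^sup>2 * (L2_wt k * (cmod (u k))\<^sup>2)" for k
  proof -
    have "Hneg_wt pl m k \<le> 1" using Hpos_wt_ge_1[of pl m k] by (simp add: Hneg_wt_def Hpos_wt_def)
    then show ?thesis by (simp add: L2_wt_def) (rule mult_left_le_one_le, simp_all add: Hneg_wt_nonneg)
  qed
  then show ?thesis using wl2_dominated[OF Hneg_wt_nonneg L2_wt_nonneg assms, of 1] by simp
qed

lemma brk_diff_le_mult: "brk True (n - j) \<le> brk pl n * brk pl j"
proof -
  have "brk True (n - j) = 1 + \<bar>real_of_int (freq pl n) - real_of_int (freq pl j)\<bar>"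
    by (simp add: brk_def bracket_def freq_def)
  also have "\<dots> \<le> (1 + \<bar>real_of_int (freq pl n)\<bar>) * (1 + \<bar>real_of_int (freq pl j)\<bar>)"
    by (simp add: algebra_simps) (smt (verit) abs_ge_zero mult_nonneg_nonneg)
  finally show ?thesis by (simp add: brk_def bracket_def)
qed

lemma brk_diff_le_add: "brk True (n - j) \<le> brk pl n + brk pl j"
proof -
  have "brk True (n - j) = 1 + \<bar>real_of_int (freq pl n) - real_of_int (freq pl j)\<bar>"
    by (simp add: brk_def bracket_def freq_def)
  also have "\<dots> \<le> (1 + \<bar>real_of_int (freq pl n)\<bar>) + (1 + \<bar>real_of_int (freq pl j)\<bar>)"
    by simp
  finally show ?thesis by (simp add: brk_def bracket_def)
qed

lemma power_add_le_two_power: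
  fixes a b :: real
  assumes "a \<ge> 0" "b \<ge> 0"
  shows "(a + b) ^ m \<le> 2 ^ m * (a ^ m + b ^ m)"
proof -
  have "(a + b) ^ m \<le> (2 * max a b) ^ m" by (rule power_mono) (use assms in auto)
  also have "\<dots> = 2 ^ m * max a b ^ m" by (simp add: power_mult_distrib)
  also have "max a b ^ m \<le> a ^ m + b ^ m"
    using assms by (cases "a \<le> b") (auto simp: max_def)
  then have "2 ^ m * max a b ^ m \<le> 2 ^ m * (a ^ m + b ^ m)" by simp
  finally show ?thesis .
qed

lemma brk_diff_power_le_add: "brk True (n - j) ^ m \<le> 2 ^ m * (brk pl n ^ m + brk pl j ^ m)"
proof -
  have "brk True (n - j) ^ m \<le> (brk pl n + brk pl j) ^ m"
    by (rule power_mono[OF brk_diff_le_add]) (simp add: less_imp_le brk_pos)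
  also have "\<dots> \<le> 2 ^ m * (brk pl n ^ m + brk pl j ^ m)"
    by (rule power_add_le_two_power) (simp_all add: less_imp_le brk_pos)
  finally show ?thesis .
qed

lemma brk_diff_power_le_mult: "brk True (n - j) ^ m \<le> brk pl n ^ m * brk pl j ^ m"
  by (metis brk_diff_le_mult power_mono power_mult_distrib less_imp_le brk_pos)

definition inv_square_bound :: real where
  "inv_square_bound = 2 * (\<Sum>k. 1 / (real k + 1)\<^sup>2)"

lemma sum_inverse_square_le_suminf:
  assumes "finite S" and inj: "inj_on (\<lambda>n. nat \<bar>n\<bar>) S"
  shows "(\<Sum>n\<in>S. 1 / (1 + \<bar>real_of_int n\<bar>)\<^sup>2) \<le> (\<Sum>k. 1 / (real k + 1)\<^sup>2)"
proof -
  have "summable (\<lambda>k. 1 / (real k + 1)\<^sup>2)"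
    using summable_Suc_iff[of "\<lambda>k. inverse (real k ^ 2)"] inverse_power_summable[of 2]
    by (simp add: divide_inverse add.commute)
  moreover have "(\<Sum>n\<in>S. 1 / (1 + \<bar>real_of_int n\<bar>)\<^sup>2) = (\<Sum>k\<in>(\<lambda>n. nat \<bar>n\<bar>) ` S. 1 / (real k + 1)\<^sup>2)"
    by (simp add: sum.reindex[OF inj] add.commute)
  ultimately show ?thesis by (simp add: sum_le_suminf assms)
qed

lemma sum_inverse_square_le:
  assumes "finite S"
  shows "(\<Sum>n\<in>S. 1 / (1 + \<bar>real_of_int n\<bar>)\<^sup>2) \<le> inv_square_bound"
proof -
  have split: "S = {n\<in>S. n \<ge> 0} \<union> {n\<in>S. n < 0}" by auto
  have "(\<Sum>n\<in>S. 1 / (1 + \<bar>real_of_int n\<bar>)\<^sup>2)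
      = (\<Sum>n\<in>{n\<in>S. n \<ge> 0}. 1 / (1 + \<bar>real_of_int n\<bar>)\<^sup>2) + (\<Sum>n\<in>{n\<in>S. n < 0}. 1 / (1 + \<bar>real_of_int n\<bar>)\<^sup>2)"
    using assms by (subst split, intro sum.union_disjoint) auto
  also have "\<dots> \<le> inv_square_bound"
    unfolding inv_square_bound_def using assms
    by (intro order.trans[OF add_mono[OF sum_inverse_square_le_suminf sum_inverse_square_le_suminf]])
      (auto simp: inj_on_def)
  finally show ?thesis .
qed

lemma inv_square_bound_nonneg: "inv_square_bound \<ge> 0"
  using sum_inverse_square_le[of "{}"] by simp

lemma Hneg_wt_le_inverse_square:
  assumes "m \<ge> 1"
  shows "Hneg_wt pl m n \<le> 1 / (1 + \<bar>real_of_int n\<bar>)\<^sup>2"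
proof -
  have "(1 + \<bar>real_of_int n\<bar>)\<^sup>2 \<le> brk pl n ^ 2" by (rule power_mono[OF brk_ge_bracket]) simp
  also have "\<dots> \<le> brk pl n ^ (2 * m)" by (rule power_increasing) (use assms brk_ge_1 in auto)
  finally show ?thesis unfolding Hneg_wt_def by (intro divide_left_mono) (auto simp: brk_pos)
qed

section \<open>Multiplication by a potential\<close>

lemma sum_Hneg_scaled_square_le:
  assumes "wl2 (Hneg_wt pl m) x" "finite S"
  shows "(\<Sum>k\<in>S. (cmod (x k) / brk pl k ^ m)\<^sup>2) \<le> (wl2_norm (Hneg_wt pl m) x)\<^sup>2"
  using wl2_partial_sum_le[OF Hneg_wt_nonneg assms]
  by (simp add: Hneg_wt_def power_divide power_mult[symmetric] mult.commute)

lemma sum_Hpos_scaled_square_le: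
  assumes "wl2 (Hpos_wt pl m) u" "finite S"
  shows "(\<Sum>k\<in>S. (brk pl k ^ m * cmod (u k))\<^sup>2) \<le> (wl2_norm (Hpos_wt pl m) u)\<^sup>2"
  using wl2_partial_sum_le[OF Hpos_wt_nonneg assms]
  by (simp add: Hpos_wt_def power_mult_distrib power_mult[symmetric] mult.commute)

lemma sum_inverse_brk_square_le:
  assumes "m \<ge> 1" "finite S"
  shows "(\<Sum>n\<in>S. (1 / brk pl n ^ m)\<^sup>2) \<le> inv_square_bound"
proof -
  have "(\<Sum>n\<in>S. (1 / brk pl n ^ m)\<^sup>2) \<le> (\<Sum>n\<in>S. 1 / (1 + \<bar>real_of_int n\<bar>)\<^sup>2)"
    using Hneg_wt_le_inverse_square[OF assms(1)]
    by (intro sum_mono) (simp add: Hneg_wt_def power_divide power_mult[symmetric] mult.commute)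
  also have "\<dots> \<le> inv_square_bound" by (rule sum_inverse_square_le[OF assms(2)])
  finally show ?thesis .
qed

lemma sum_norm_square_le_Hpos:
  assumes "m \<ge> 1" "wl2 (Hpos_wt pl m) u" "finite G"
  shows "(\<Sum>j\<in>G. cmod (u j))\<^sup>2 \<le> inv_square_bound * (wl2_norm (Hpos_wt pl m) u)\<^sup>2"
proof -
  have "(\<Sum>j\<in>G. cmod (u j))\<^sup>2 = (\<Sum>j\<in>G. 1 / brk pl j ^ m * (brk pl j ^ m * cmod (u j)))\<^sup>2"
    by simp
  also have "\<dots> \<le> (\<Sum>j\<in>G. (1 / brk pl j ^ m)\<^sup>2) * (\<Sum>j\<in>G. (brk pl j ^ m * cmod (u j))\<^sup>2)"
    by (rule Cauchy_Schwarz_ineq_sum)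
  also have "\<dots> \<le> inv_square_bound * (wl2_norm (Hpos_wt pl m) u)\<^sup>2"
    using assms inv_square_bound_nonneg
    by (intro mult_mono sum_inverse_brk_square_le sum_Hpos_scaled_square_le sum_nonneg) simp_all
  finally show ?thesis .
qed

lemma sum_reflect_le:
  fixes h :: "int \<Rightarrow> real"
  assumes "finite G" "\<And>S. finite S \<Longrightarrow> sum h S \<le> A"
  shows "(\<Sum>j\<in>G. h (n - j)) \<le> A"
proof -
  have "inj_on (\<lambda>j. n - j) G" by (auto simp: inj_on_def)
  then have "(\<Sum>j\<in>G. h (n - j)) = sum h ((\<lambda>j. n - j) ` G)" by (simp add: sum.reindex comp_def)
  then show ?thesis using assms by simp
qed

lemma sum_translate_le:
  fixes h :: "int \<Rightarrow> real"
  assumes "finite F" "\<And>S. finite S \<Longrightarrow> sum h S \<le> A"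
  shows "(\<Sum>n\<in>F. h (n - j)) \<le> A"
proof -
  have "inj_on (\<lambda>n. n - j) F" by (auto simp: inj_on_def)
  then have "(\<Sum>n\<in>F. h (n - j)) = sum h ((\<lambda>n. n - j) ` F)" by (simp add: sum.reindex comp_def)
  then show ?thesis using assms by simp
qed

text \<open>Young's inequality for convolutions on finite index sets, in the forms
  \<open>\<parallel>a * U\<parallel>\<^sub>2 \<le> \<parallel>a\<parallel>\<^sub>2 \<parallel>U\<parallel>\<^sub>1\<close> and \<open>\<parallel>a * U\<parallel>\<^sub>2 \<le> \<parallel>a\<parallel>\<^sub>1 \<parallel>U\<parallel>\<^sub>2\<close>.\<close>

lemma sum_square_convolution_le_l1:
  fixes a U :: "int \<Rightarrow> real"
  assumes F: "finite F" and G: "finite G" and U0: "\<And>j. U j \<ge> 0"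
    and hA: "\<And>S. finite S \<Longrightarrow> (\<Sum>k\<in>S. (a k)\<^sup>2) \<le> A"
  shows "(\<Sum>n\<in>F. (\<Sum>j\<in>G. a (n - j) * U j)\<^sup>2) \<le> (\<Sum>j\<in>G. U j)\<^sup>2 * A"
proof -
  have cs: "(\<Sum>j\<in>G. a (n - j) * U j)\<^sup>2 \<le> (\<Sum>j\<in>G. (a (n - j))\<^sup>2 * U j) * (\<Sum>j\<in>G. U j)" for n
  proof -
    have "(\<Sum>j\<in>G. a (n - j) * U j)\<^sup>2 = (\<Sum>j\<in>G. (a (n - j) * sqrt (U j)) * sqrt (U j))\<^sup>2"
      by (simp add: U0 mult.assoc)
    also have "\<dots> \<le> (\<Sum>j\<in>G. (a (n - j) * sqrt (U j))\<^sup>2) * (\<Sum>j\<in>G. (sqrt (U j))\<^sup>2)"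
      by (rule Cauchy_Schwarz_ineq_sum)
    also have "\<dots> = (\<Sum>j\<in>G. (a (n - j))\<^sup>2 * U j) * (\<Sum>j\<in>G. U j)"
      by (simp add: power_mult_distrib U0)
    finally show ?thesis .
  qed
  have "(\<Sum>n\<in>F. (\<Sum>j\<in>G. a (n - j) * U j)\<^sup>2) \<le> (\<Sum>n\<in>F. (\<Sum>j\<in>G. (a (n - j))\<^sup>2 * U j) * (\<Sum>j\<in>G. U j))"
    by (rule sum_mono) (rule cs)
  also have "\<dots> = (\<Sum>j\<in>G. U j) * (\<Sum>j\<in>G. U j * (\<Sum>n\<in>F. (a (n - j))\<^sup>2))"
    by (simp add: sum_distrib_left sum_distrib_right sum.swap[of _ F G] mult_ac)
  also have "\<dots> \<le> (\<Sum>j\<in>G. U j) * (\<Sum>j\<in>G. U j * A)"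
    by (intro mult_left_mono sum_mono sum_nonneg U0 sum_translate_le[OF F hA])
  also have "\<dots> = (\<Sum>j\<in>G. U j)\<^sup>2 * A"
    by (simp only: sum_distrib_right[symmetric]) (simp add: power2_eq_square)
  finally show ?thesis .
qed

lemma sum_square_convolution_le_l2:
  fixes p U :: "int \<Rightarrow> real"
  assumes F: "finite F" and G: "finite G" and p0: "\<And>k. p k \<ge> 0" and "L \<ge> 0"
    and hL: "\<And>S. finite S \<Longrightarrow> sum p S \<le> L"
  shows "(\<Sum>n\<in>F. (\<Sum>j\<in>G. p (n - j) * U j)\<^sup>2) \<le> L\<^sup>2 * (\<Sum>j\<in>G. (U j)\<^sup>2)"
proof -
  have cs: "(\<Sum>j\<in>G. p (n - j) * U j)\<^sup>2 \<le> L * (\<Sum>j\<in>G. p (n - j) * (U j)\<^sup>2)" for n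
  proof -
    have "(\<Sum>j\<in>G. p (n - j) * U j)\<^sup>2 = (\<Sum>j\<in>G. sqrt (p (n - j)) * (sqrt (p (n - j)) * U j))\<^sup>2"
      by (simp add: p0 mult.assoc[symmetric])
    also have "\<dots> \<le> (\<Sum>j\<in>G. (sqrt (p (n - j)))\<^sup>2) * (\<Sum>j\<in>G. (sqrt (p (n - j)) * U j)\<^sup>2)"
      by (rule Cauchy_Schwarz_ineq_sum)
    also have "\<dots> = (\<Sum>j\<in>G. p (n - j)) * (\<Sum>j\<in>G. p (n - j) * (U j)\<^sup>2)"
      by (simp add: p0 power_mult_distrib)
    also have "\<dots> \<le> L * (\<Sum>j\<in>G. p (n - j) * (U j)\<^sup>2)"
      by (intro mult_right_mono sum_reflect_le[OF G hL] sum_nonneg mult_nonneg_nonneg p0) simp_all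
    finally show ?thesis .
  qed
  have "(\<Sum>n\<in>F. (\<Sum>j\<in>G. p (n - j) * U j)\<^sup>2) \<le> (\<Sum>n\<in>F. L * (\<Sum>j\<in>G. p (n - j) * (U j)\<^sup>2))"
    by (rule sum_mono) (rule cs)
  also have "\<dots> = L * (\<Sum>j\<in>G. (U j)\<^sup>2 * (\<Sum>n\<in>F. p (n - j)))"
    by (simp add: sum_distrib_left sum_distrib_right sum.swap[of _ F G] mult_ac)
  also have "\<dots> \<le> L * (\<Sum>j\<in>G. (U j)\<^sup>2 * L)"
    by (intro mult_left_mono sum_mono \<open>L \<ge> 0\<close> sum_translate_le[OF F hL]) simp_all
  also have "\<dots> = L\<^sup>2 * (\<Sum>j\<in>G. (U j)\<^sup>2)"
    by (simp only: sum_distrib_right[symmetric]) (simp add: power2_eq_square)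
  finally show ?thesis .
qed

lemma sum_square_weighted_convolution_le:
  fixes a b c :: "int \<Rightarrow> real"
  assumes F: "finite F" and G: "finite G" and "A \<ge> 0"
    and hA: "\<And>S. finite S \<Longrightarrow> (\<Sum>k\<in>S. (a k)\<^sup>2) \<le> A"
    and hB: "(\<Sum>j\<in>G. (b j)\<^sup>2) \<le> B" and hC: "(\<Sum>n\<in>F. (c n)\<^sup>2) \<le> C"
  shows "(\<Sum>n\<in>F. (c n * (\<Sum>j\<in>G. a (n - j) * b j))\<^sup>2) \<le> C * A * B"
proof -
  have "B \<ge> 0" using hB by (smt (verit) sum_nonneg zero_le_power2)
  have "(c n * (\<Sum>j\<in>G. a (n - j) * b j))\<^sup>2 \<le> (c n)\<^sup>2 * (A * B)" for n
  proof -
    have "(\<Sum>j\<in>G. a (n - j) * b j)\<^sup>2 \<le> A * B"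
      by (rule order.trans[OF Cauchy_Schwarz_ineq_sum])
        (intro mult_mono sum_reflect_le[OF G hA] hB \<open>A \<ge> 0\<close> sum_nonneg, simp_all)
    then show ?thesis by (simp add: power_mult_distrib mult_left_mono)
  qed
  then have "(\<Sum>n\<in>F. (c n * (\<Sum>j\<in>G. a (n - j) * b j))\<^sup>2) \<le> (\<Sum>n\<in>F. (c n)\<^sup>2 * (A * B))"
    by (rule sum_mono)
  also have "\<dots> = (\<Sum>n\<in>F. (c n)\<^sup>2) * (A * B)" by (simp add: sum_distrib_right)
  also have "\<dots> \<le> C * (A * B)" using \<open>A \<ge> 0\<close> \<open>B \<ge> 0\<close> by (intro mult_right_mono[OF hC]) simp
  finally show ?thesis by (simp add: mult_ac)
qed

lemma partial_sums_infsum_le: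
  fixes g :: "int \<Rightarrow> int \<Rightarrow> complex"
  assumes F: "finite F" and sm: "\<And>n. n \<in> F \<Longrightarrow> g n summable_on UNIV"
    and bound: "\<And>G. finite G \<Longrightarrow> (\<Sum>n\<in>F. c n * (cmod (\<Sum>j\<in>G. g n j))\<^sup>2) \<le> B"
  shows "(\<Sum>n\<in>F. c n * (cmod (infsum (g n) UNIV))\<^sup>2) \<le> B"
proof -
  have "((\<lambda>G. \<Sum>n\<in>F. c n * (cmod (\<Sum>j\<in>G. g n j))\<^sup>2) \<longlongrightarrow> (\<Sum>n\<in>F. c n * (cmod (infsum (g n) UNIV))\<^sup>2))
          (finite_subsets_at_top UNIV)"
  proof (intro tendsto_sum tendsto_mult tendsto_const tendsto_power tendsto_norm)
    fix n assume "n \<in> F"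
    then show "((\<lambda>G. \<Sum>j\<in>G. g n j) \<longlongrightarrow> infsum (g n) UNIV) (finite_subsets_at_top UNIV)"
      using sm has_sum_infsum unfolding has_sum_def by blast
  qed
  then show ?thesis
    by (rule tendsto_upperbound) (auto intro!: eventually_finite_subsets_at_top_weakI bound)
qed

lemma pot_mult_summable:
  assumes x: "wl2 (Hneg_wt True m) x" and u: "wl2 (Hpos_wt pl m) u"
  shows "(\<lambda>j. x (n - j) * u j) summable_on UNIV"
proof -
  define a where "a k = cmod (x k) / brk True k ^ m" for k
  define b where "b j = brk pl j ^ m * cmod (u j)" for j
  define A where "A = (wl2_norm (Hneg_wt True m) x)\<^sup>2"
  define B where "B = (wl2_norm (Hpos_wt pl m) u)\<^sup>2"
  have pointwise: "cmod (x (n - j) * u j) \<le> brk pl n ^ m * (((a (n - j))\<^sup>2 + (b j)\<^sup>2) / 2)" for j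
  proof -
    have "cmod (x (n - j) * u j) = a (n - j) * brk True (n - j) ^ m * cmod (u j)"
      by (simp add: norm_mult a_def brk_pos)
    also have "\<dots> \<le> a (n - j) * (brk pl n ^ m * brk pl j ^ m) * cmod (u j)"
      by (intro mult_right_mono mult_left_mono brk_diff_power_le_mult) (simp_all add: a_def brk_pos less_imp_le)
    also have "\<dots> = brk pl n ^ m * (a (n - j) * b j)" by (simp add: b_def mult_ac)
    also have "\<dots> \<le> brk pl n ^ m * (((a (n - j))\<^sup>2 + (b j)\<^sup>2) / 2)"
      using sum_squares_bound[of "a (n - j)" "b j"]
      by (intro mult_left_mono) (simp_all add: brk_pos less_imp_le mult_ac)
    finally show ?thesis .
  qed
  have bound: "(\<Sum>j\<in>G. cmod (x (n - j) * u j)) \<le> brk pl n ^ m * ((A + B) / 2)" if G: "finite G" for G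
  proof -
    have "(\<Sum>j\<in>G. cmod (x (n - j) * u j)) \<le> (\<Sum>j\<in>G. brk pl n ^ m * (((a (n - j))\<^sup>2 + (b j)\<^sup>2) / 2))"
      by (rule sum_mono) (rule pointwise)
    also have "\<dots> = brk pl n ^ m * (((\<Sum>j\<in>G. (a (n - j))\<^sup>2) + (\<Sum>j\<in>G. (b j)\<^sup>2)) / 2)"
      by (simp only: sum_distrib_left[symmetric] sum_divide_distrib[symmetric] sum.distrib)
    also have "\<dots> \<le> brk pl n ^ m * ((A + B) / 2)"
      unfolding A_def B_def a_def b_def
      by (intro mult_left_mono divide_right_mono add_mono sum_reflect_le[OF G]
          sum_Hneg_scaled_square_le[OF x] sum_Hpos_scaled_square_le[OF u G])
        (simp_all add: brk_pos less_imp_le)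
    finally show ?thesis .
  qed
  have "(\<lambda>j. norm (x (n - j) * u j)) summable_on UNIV"
    by (rule nonneg_bdd_above_summable_on) (auto intro!: bdd_aboveI2[where M="brk pl n ^ m * ((A + B) / 2)"] bound)
  then show ?thesis by (rule abs_summable_summable)
qed

lemma convolution_pointwise_split:
  fixes x u :: "int \<Rightarrow> complex" and m :: nat and pl :: bool
  defines "a \<equiv> \<lambda>k. cmod (x k) / brk True k ^ m" and "b \<equiv> \<lambda>j. brk pl j ^ m * cmod (u j)"
  shows "cmod (\<Sum>j\<in>G. x (n - j) * u j) / brk pl n ^ m
          \<le> 2 ^ m * ((\<Sum>j\<in>G. a (n - j) * cmod (u j)) + (\<Sum>j\<in>G. a (n - j) * b j) / brk pl n ^ m)"
proof -
  define c where "c = 1 / brk pl n ^ m"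
  have c0: "c \<ge> 0" by (simp add: c_def brk_pos less_imp_le)
  have pointwise: "c * (cmod (x (n - j)) * cmod (u j)) \<le> 2 ^ m * (a (n - j) * cmod (u j) + c * (a (n - j) * b j))" for j
  proof -
    have "c * (cmod (x (n - j)) * cmod (u j)) = c * a (n - j) * cmod (u j) * brk True (n - j) ^ m"
      by (simp add: a_def brk_pos)
    also have "\<dots> \<le> c * a (n - j) * cmod (u j) * (2 ^ m * (brk pl n ^ m + brk pl j ^ m))"
      by (intro mult_left_mono brk_diff_power_le_add mult_nonneg_nonneg c0)
        (simp_all add: a_def brk_pos less_imp_le)
    also have "\<dots> = 2 ^ m * (a (n - j) * cmod (u j) + c * (a (n - j) * b j))"
      by (simp add: c_def b_def brk_pos algebra_simps)
    finally show ?thesis .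
  qed
  have "c * cmod (\<Sum>j\<in>G. x (n - j) * u j) \<le> c * (\<Sum>j\<in>G. cmod (x (n - j)) * cmod (u j))"
    by (intro mult_left_mono c0 order.trans[OF norm_sum]) (simp add: norm_mult)
  also have "\<dots> = (\<Sum>j\<in>G. c * (cmod (x (n - j)) * cmod (u j)))"
    by (rule sum_distrib_left)
  also have "\<dots> \<le> (\<Sum>j\<in>G. 2 ^ m * (a (n - j) * cmod (u j) + c * (a (n - j) * b j)))"
    by (rule sum_mono) (rule pointwise)
  also have "\<dots> = 2 ^ m * ((\<Sum>j\<in>G. a (n - j) * cmod (u j)) + c * (\<Sum>j\<in>G. a (n - j) * b j))"
    by (simp only: sum_distrib_left[symmetric] sum.distrib)
  finally show ?thesis by (simp add: c_def)
qed

definition mult_const :: "nat \<Rightarrow> real" where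
  "mult_const m = 2 ^ (m + 1) * sqrt inv_square_bound"

lemma mult_const_nonneg: "mult_const m \<ge> 0"
  by (simp add: mult_const_def inv_square_bound_nonneg)

lemma two_power_square: "((2::real) ^ m)\<^sup>2 = 4 ^ m"
  by (induction m) (simp_all add: power2_eq_square algebra_simps)

lemma pot_mult_partial_sum_le:
  assumes m: "m \<ge> 1" and x: "wl2 (Hneg_wt True m) x" and u: "wl2 (Hpos_wt pl m) u"
    and F: "finite F" and G: "finite G"
  shows "(\<Sum>n\<in>F. Hneg_wt pl m n * (cmod (\<Sum>j\<in>G. x (n - j) * u j))\<^sup>2)
           \<le> (mult_const m * wl2_norm (Hneg_wt True m) x * wl2_norm (Hpos_wt pl m) u)\<^sup>2"
proof -
  define A where "A = (wl2_norm (Hneg_wt True m) x)\<^sup>2"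
  define B where "B = (wl2_norm (Hpos_wt pl m) u)\<^sup>2"
  define Z where "Z = inv_square_bound"
  define a where "a k = cmod (x k) / brk True k ^ m" for k
  define b where "b j = brk pl j ^ m * cmod (u j)" for j
  define c where "c n = 1 / brk pl n ^ m" for n
  define T1 where "T1 n = (\<Sum>j\<in>G. a (n - j) * cmod (u j))" for n
  define T2 where "T2 n = c n * (\<Sum>j\<in>G. a (n - j) * b j)" for n
  have "A \<ge> 0" "Z \<ge> 0" by (simp_all add: A_def Z_def inv_square_bound_nonneg)
  have hA: "(\<Sum>k\<in>S. (a k)\<^sup>2) \<le> A" if "finite S" for S
    unfolding A_def a_def by (rule sum_Hneg_scaled_square_le[OF x that])
  have hB: "(\<Sum>j\<in>G. (b j)\<^sup>2) \<le> B"
    unfolding B_def b_def by (rule sum_Hpos_scaled_square_le[OF u G])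
  have hC: "(\<Sum>n\<in>S. (c n)\<^sup>2) \<le> Z" if "finite S" for S
    unfolding c_def Z_def by (rule sum_inverse_brk_square_le[OF m that])
  have pointwise: "Hneg_wt pl m n * (cmod (\<Sum>j\<in>G. x (n - j) * u j))\<^sup>2 \<le> 2 * 4 ^ m * ((T1 n)\<^sup>2 + (T2 n)\<^sup>2)" for n
  proof -
    have "Hneg_wt pl m n * (cmod (\<Sum>j\<in>G. x (n - j) * u j))\<^sup>2 = (cmod (\<Sum>j\<in>G. x (n - j) * u j) / brk pl n ^ m)\<^sup>2"
      by (simp add: Hneg_wt_def power_divide power_mult[symmetric] mult.commute)
    also have "\<dots> \<le> (2 ^ m * (T1 n + T2 n))\<^sup>2"
    proof (rule power_mono)
      have "T2 n = (\<Sum>j\<in>G. a (n - j) * b j) / brk pl n ^ m" by (simp add: T2_def c_def)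
      then show "cmod (\<Sum>j\<in>G. x (n - j) * u j) / brk pl n ^ m \<le> 2 ^ m * (T1 n + T2 n)"
        unfolding T1_def a_def b_def by (simp only: convolution_pointwise_split)
    qed (simp add: brk_pos less_imp_le)
    also have "\<dots> \<le> 4 ^ m * (2 * ((T1 n)\<^sup>2 + (T2 n)\<^sup>2))"
      using sum_squares_bound[of "T1 n" "T2 n"]
      by (simp add: power_mult_distrib two_power_square power2_sum)
    finally show ?thesis by (simp add: algebra_simps)
  qed
  have l1_u: "(\<Sum>j\<in>G. cmod (u j))\<^sup>2 \<le> Z * B"
    unfolding Z_def B_def by (rule sum_norm_square_le_Hpos[OF m u G])
  have "(\<Sum>n\<in>F. Hneg_wt pl m n * (cmod (\<Sum>j\<in>G. x (n - j) * u j))\<^sup>2) \<le> (\<Sum>n\<in>F. 2 * 4 ^ m * ((T1 n)\<^sup>2 + (T2 n)\<^sup>2))"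
    by (rule sum_mono) (rule pointwise)
  also have "\<dots> = 2 * 4 ^ m * ((\<Sum>n\<in>F. (T1 n)\<^sup>2) + (\<Sum>n\<in>F. (T2 n)\<^sup>2))"
    by (simp only: sum_distrib_left[symmetric] sum.distrib)
  also have "\<dots> \<le> 2 * 4 ^ m * ((\<Sum>j\<in>G. cmod (u j))\<^sup>2 * A + Z * A * B)"
    unfolding T1_def T2_def
    by (intro mult_left_mono add_mono sum_square_convolution_le_l1[OF F G _ hA]
        sum_square_weighted_convolution_le[OF F G \<open>A \<ge> 0\<close> hA hB hC[OF F]]) simp_all
  also have "\<dots> \<le> 2 * 4 ^ m * (Z * B * A + Z * A * B)"
    using \<open>A \<ge> 0\<close> \<open>Z \<ge> 0\<close> by (intro mult_left_mono add_mono mult_right_mono l1_u) simp_all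
  also have "\<dots> = (mult_const m * wl2_norm (Hneg_wt True m) x * wl2_norm (Hpos_wt pl m) u)\<^sup>2"
    using \<open>Z \<ge> 0\<close> by (simp add: A_def B_def Z_def mult_const_def power_mult_distrib two_power_square)
  finally show ?thesis .
qed

lemma pot_mult_Hneg:
  assumes m: "m \<ge> 1" and x: "wl2 (Hneg_wt True m) x" and u: "wl2 (Hpos_wt pl m) u"
  shows "wl2 (Hneg_wt pl m) (pot_mult x u)"
    and "wl2_norm (Hneg_wt pl m) (pot_mult x u)
           \<le> mult_const m * wl2_norm (Hneg_wt True m) x * wl2_norm (Hpos_wt pl m) u"
proof -
  have bound: "(\<Sum>n\<in>F. Hneg_wt pl m n * (cmod (pot_mult x u n))\<^sup>2)
          \<le> (mult_const m * wl2_norm (Hneg_wt True m) x * wl2_norm (Hpos_wt pl m) u)\<^sup>2" if "finite F" for F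
    unfolding pot_mult_def
    by (rule partial_sums_infsum_le[OF that pot_mult_summable[OF x u] pot_mult_partial_sum_le[OF m x u that]])
  have "mult_const m * wl2_norm (Hneg_wt True m) x * wl2_norm (Hpos_wt pl m) u \<ge> 0"
    using mult_const_nonneg wl2_norm_nonneg[OF Hneg_wt_nonneg] wl2_norm_nonneg[OF Hpos_wt_nonneg] by simp
  from wl2_bounded_partial_sums[OF Hneg_wt_nonneg this bound]
  show "wl2 (Hneg_wt pl m) (pot_mult x u)"
    and "wl2_norm (Hneg_wt pl m) (pot_mult x u)
           \<le> mult_const m * wl2_norm (Hneg_wt True m) x * wl2_norm (Hpos_wt pl m) u"
    by simp_all
qed

lemma infsum_diff:
  fixes f g :: "'a \<Rightarrow> complex"
  assumes "f summable_on A" "g summable_on A"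
  shows "infsum (\<lambda>x. f x - g x) A = infsum f A - infsum g A"
  using infsum_add[OF assms(1) summable_on_uminus[THEN iffD2, OF assms(2)]] by (simp add: infsum_uminus)

lemma pot_mult_diff_right:
  assumes "\<And>n. (\<lambda>j. x (n - j) * u j) summable_on UNIV" "\<And>n. (\<lambda>j. x (n - j) * v j) summable_on UNIV"
  shows "pot_mult x (\<lambda>j. u j - v j) = (\<lambda>n. pot_mult x u n - pot_mult x v n)"
  unfolding pot_mult_def using infsum_diff[OF assms(1) assms(2)] by (simp add: right_diff_distrib)

lemma pot_mult_add_left:
  assumes "\<And>n. (\<lambda>j. x (n - j) * u j) summable_on UNIV" "\<And>n. (\<lambda>j. y (n - j) * u j) summable_on UNIV"
  shows "pot_mult (\<lambda>k. x k + y k) u = (\<lambda>n. pot_mult x u n + pot_mult y u n)"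
  unfolding pot_mult_def using infsum_add[OF assms(1) assms(2)] by (simp add: distrib_right)

lemma pot_mult_diff_left:
  assumes "\<And>n. (\<lambda>j. x (n - j) * u j) summable_on UNIV" "\<And>n. (\<lambda>j. y (n - j) * u j) summable_on UNIV"
  shows "pot_mult (\<lambda>k. x k - y k) u = (\<lambda>n. pot_mult x u n - pot_mult y u n)"
  unfolding pot_mult_def using infsum_diff[OF assms(1) assms(2)] by (simp add: left_diff_distrib)

lemma pot_mult_cmult_right: "pot_mult x (\<lambda>j. c * u j) = (\<lambda>n. c * pot_mult x u n)"
  unfolding pot_mult_def by (simp add: infsum_cmult_right'[symmetric] mult_ac)

lemma pot_mult_zero_right: "pot_mult x (\<lambda>j. 0) = (\<lambda>n. 0)"
  unfolding pot_mult_def by simp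

lemma sum_le_sum_support:
  fixes h :: "int \<Rightarrow> real"
  assumes "finite F0" "\<And>k. k \<notin> F0 \<Longrightarrow> h k = 0" "\<And>k. h k \<ge> 0" "finite S"
  shows "sum h S \<le> sum h F0"
proof -
  have "sum h S = sum h (S \<inter> F0)"
    by (rule sum.mono_neutral_right) (use assms in auto)
  also have "\<dots> \<le> sum h F0" by (rule sum_mono2) (use assms in auto)
  finally show ?thesis .
qed

lemma pot_mult_L2_finite_support:
  assumes F0: "finite F0" and supp: "\<And>k. k \<notin> F0 \<Longrightarrow> x k = 0"
    and u: "wl2 L2_wt u" and summable: "\<And>n. (\<lambda>j. x (n - j) * u j) summable_on UNIV"
  shows "wl2 L2_wt (pot_mult x u)" "wl2_norm L2_wt (pot_mult x u) \<le> (\<Sum>k\<in>F0. cmod (x k)) * wl2_norm L2_wt u"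
proof -
  define L where "L = (\<Sum>k\<in>F0. cmod (x k))"
  have "L \<ge> 0" by (simp add: L_def sum_nonneg)
  have hL: "(\<Sum>k\<in>S. cmod (x k)) \<le> L" if "finite S" for S
    unfolding L_def by (rule sum_le_sum_support[OF F0 _ _ that]) (simp_all add: supp)
  have partial: "(\<Sum>n\<in>F. L2_wt n * (cmod (\<Sum>j\<in>G. x (n - j) * u j))\<^sup>2) \<le> (L * wl2_norm L2_wt u)\<^sup>2"
    if F: "finite F" and G: "finite G" for F G
  proof -
    have "(\<Sum>n\<in>F. L2_wt n * (cmod (\<Sum>j\<in>G. x (n - j) * u j))\<^sup>2)
        \<le> (\<Sum>n\<in>F. (\<Sum>j\<in>G. cmod (x (n - j)) * cmod (u j))\<^sup>2)"
    proof (rule sum_mono)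
      fix n
      have "cmod (\<Sum>j\<in>G. x (n - j) * u j) \<le> (\<Sum>j\<in>G. cmod (x (n - j)) * cmod (u j))"
        by (rule order.trans[OF norm_sum]) (simp add: norm_mult)
      then show "L2_wt n * (cmod (\<Sum>j\<in>G. x (n - j) * u j))\<^sup>2 \<le> (\<Sum>j\<in>G. cmod (x (n - j)) * cmod (u j))\<^sup>2"
        by (simp add: L2_wt_def power_mono)
    qed
    also have "\<dots> \<le> L\<^sup>2 * (\<Sum>j\<in>G. (cmod (u j))\<^sup>2)"
      by (rule sum_square_convolution_le_l2[OF F G _ \<open>L \<ge> 0\<close> hL]) simp
    also have "\<dots> \<le> (L * wl2_norm L2_wt u)\<^sup>2"
      using wl2_partial_sum_le[OF L2_wt_nonneg u G]
      by (simp add: L2_wt_def power_mult_distrib mult_left_mono)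
    finally show ?thesis .
  qed
  have bound: "(\<Sum>n\<in>F. L2_wt n * (cmod (pot_mult x u n))\<^sup>2) \<le> (L * wl2_norm L2_wt u)\<^sup>2" if "finite F" for F
    unfolding pot_mult_def by (rule partial_sums_infsum_le[OF that summable partial[OF that]])
  have "L * wl2_norm L2_wt u \<ge> 0" using \<open>L \<ge> 0\<close> wl2_norm_nonneg[OF L2_wt_nonneg] by simp
  from wl2_bounded_partial_sums[OF L2_wt_nonneg this bound]
  show "wl2 L2_wt (pot_mult x u)" "wl2_norm L2_wt (pot_mult x u) \<le> (\<Sum>k\<in>F0. cmod (x k)) * wl2_norm L2_wt u"
    by (simp_all add: L_def)
qed

definition truncate :: "int set \<Rightarrow> (int \<Rightarrow> complex) \<Rightarrow> int \<Rightarrow> complex" where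
  "truncate F u k = (if k \<in> F then u k else 0)"

lemma wl2_truncate:
  assumes pos: "\<And>k. \<omega> k \<ge> 0" and "finite F"
  shows "wl2 \<omega> (truncate F u)"
proof -
  define B where "B = (\<Sum>k\<in>F. \<omega> k * (cmod (u k))\<^sup>2)"
  have "B \<ge> 0" by (simp add: B_def sum_nonneg pos)
  have "(\<Sum>k\<in>S. \<omega> k * (cmod (truncate F u k))\<^sup>2) \<le> (sqrt B)\<^sup>2" if "finite S" for S
  proof -
    have "(\<Sum>k\<in>S. \<omega> k * (cmod (truncate F u k))\<^sup>2) \<le> (\<Sum>k\<in>F. \<omega> k * (cmod (truncate F u k))\<^sup>2)"
      by (rule sum_le_sum_support[OF \<open>finite F\<close> _ _ that]) (simp_all add: truncate_def pos)
    also have "\<dots> = B" unfolding B_def by (rule sum.cong) (simp_all add: truncate_def)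
    finally show ?thesis using \<open>B \<ge> 0\<close> by simp
  qed
  then show ?thesis by (rule wl2_bounded_partial_sums(1)[OF pos real_sqrt_ge_zero[OF \<open>B \<ge> 0\<close>]])
qed

lemma wl2_truncate_tail_small:
  assumes pos: "\<And>k. \<omega> k \<ge> 0" and x: "wl2 \<omega> x" and "\<epsilon> > 0"
  obtains F where "finite F" "wl2_norm \<omega> (\<lambda>k. x k - truncate F x k) \<le> \<epsilon>"
proof -
  define h where "h k = \<omega> k * (cmod (x k))\<^sup>2" for k
  have h0: "h k \<ge> 0" for k by (simp add: h_def pos)
  define S where "S = infsum h UNIV"
  have hs: "(h has_sum S) UNIV" using x unfolding wl2_def S_def h_def by (rule has_sum_infsum)
  then have "\<forall>\<^sub>F F in finite_subsets_at_top UNIV. dist (sum h F) S < \<epsilon>\<^sup>2"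
    using \<open>\<epsilon> > 0\<close> unfolding has_sum_def by (intro tendstoD) auto
  then obtain F where F: "finite F" and close: "dist (sum h F) S < \<epsilon>\<^sup>2"
    unfolding eventually_finite_subsets_at_top by blast
  have "(\<Sum>k\<in>G. \<omega> k * (cmod (x k - truncate F x k))\<^sup>2) \<le> \<epsilon>\<^sup>2" if G: "finite G" for G
  proof -
    have "(\<Sum>k\<in>G. \<omega> k * (cmod (x k - truncate F x k))\<^sup>2) = (\<Sum>k\<in>G - F. h k)"
      by (rule sum.mono_neutral_cong_right) (use G in \<open>auto simp: truncate_def h_def\<close>)
    also have "\<dots> = sum h (G \<union> F) - sum h F"
    proof -
      have "sum h ((G - F) \<union> F) = sum h (G - F) + sum h F"
        by (rule sum.union_disjoint) (use G F in auto)
      moreover have "(G - F) \<union> F = G \<union> F" by blast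
      ultimately show ?thesis by simp
    qed
    also have "\<dots> \<le> S - sum h F"
      using finite_sum_le_has_sum[OF hs, of "G \<union> F"] G F h0 by simp
    also have "\<dots> < \<epsilon>\<^sup>2" using close by (simp add: dist_real_def)
    finally show ?thesis by (rule less_imp_le)
  qed
  then have "wl2_norm \<omega> (\<lambda>k. x k - truncate F x k) \<le> \<epsilon>"
    by (rule wl2_bounded_partial_sums(2)[OF pos less_imp_le[OF \<open>\<epsilon> > 0\<close>]])
  with F show ?thesis by (rule that)
qed

section \<open>The inverse of \<open>D\<^sup>2\<^sup>m + \<mu>\<close>\<close>

definition symb :: "bool \<Rightarrow> nat \<Rightarrow> int \<Rightarrow> real" where
  "symb pl m k = (pi * real_of_int (freq pl k)) ^ (2 * m)"

lemma symb_nonneg: "symb pl m k \<ge> 0"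
  by (simp add: symb_def power_mult)

lemma S_expr_symb: "S_expr pl m X u k = complex_of_real (symb pl m k) * u k + pot_mult X u k"
  by (simp add: S_expr_def symb_def)

lemma Hpos_wt_le_symb:
  assumes "\<mu> \<ge> 1"
  shows "Hpos_wt pl m k \<le> 4 ^ m * (symb pl m k + \<mu>)"
proof -
  define t where "t = \<bar>real_of_int (freq pl k)\<bar>"
  have "t \<ge> 0" by (simp add: t_def)
  have "t ^ (2 * m) \<le> (pi * t) ^ (2 * m)"
    using \<open>t \<ge> 0\<close> pi_gt3 by (intro power_mono) (auto intro: mult_right_mono[of 1 pi t, simplified])
  also have "\<dots> = symb pl m k"
    by (simp add: symb_def t_def power_mult_distrib power_mult power2_abs)
  finally have "t ^ (2 * m) \<le> symb pl m k" .
  have "Hpos_wt pl m k = (1 + t) ^ (2 * m)" by (simp add: Hpos_wt_def brk_def bracket_def t_def)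
  also have "\<dots> \<le> 2 ^ (2 * m) * (1 ^ (2 * m) + t ^ (2 * m))"
    by (rule power_add_le_two_power) (simp_all add: \<open>t \<ge> 0\<close>)
  also have "\<dots> \<le> 4 ^ m * (symb pl m k + \<mu>)"
    using \<open>t ^ (2 * m) \<le> symb pl m k\<close> assms by (simp add: power_mult)
  finally show ?thesis .
qed

definition diag_inv :: "bool \<Rightarrow> nat \<Rightarrow> real \<Rightarrow> (int \<Rightarrow> complex) \<Rightarrow> int \<Rightarrow> complex" where
  "diag_inv pl m \<mu> g k = g k / complex_of_real (symb pl m k + \<mu>)"

lemma Hpos_wt_diag_inv:
  assumes "\<mu> \<ge> 1"
  shows "Hpos_wt pl m k * (cmod (diag_inv pl m \<mu> g k))\<^sup>2
           = Hpos_wt pl m k / (symb pl m k + \<mu>)\<^sup>2 * (cmod (g k))\<^sup>2"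
proof -
  have "symb pl m k + \<mu> > 0" using symb_nonneg[of pl m k] assms by simp
  then have "cmod (diag_inv pl m \<mu> g k) = cmod (g k) / (symb pl m k + \<mu>)"
    unfolding diag_inv_def by (simp add: norm_divide del: of_real_add)
  then show ?thesis by (simp add: power_divide)
qed

lemma diag_inv_Hneg_to_Hpos:
  assumes \<mu>: "\<mu> \<ge> 1" and g: "wl2 (Hneg_wt pl m) g"
  shows "wl2 (Hpos_wt pl m) (diag_inv pl m \<mu> g)"
    "wl2_norm (Hpos_wt pl m) (diag_inv pl m \<mu> g) \<le> 4 ^ m * wl2_norm (Hneg_wt pl m) g"
proof -
  have "Hpos_wt pl m k / (symb pl m k + \<mu>)\<^sup>2 \<le> (4 ^ m)\<^sup>2 * Hneg_wt pl m k" for k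
  proof -
    define t where "t = Hpos_wt pl m k"
    define s where "s = symb pl m k + \<mu>"
    have "t > 0" "s > 0" using Hpos_wt_pos symb_nonneg[of pl m k] \<mu> by (auto simp: t_def s_def)
    have "t \<le> 4 ^ m * s" unfolding t_def s_def by (rule Hpos_wt_le_symb[OF \<mu>])
    then have "t * t \<le> (4 ^ m * s) * (4 ^ m * s)" using \<open>t > 0\<close> by (intro mult_mono) auto
    then have "t / s\<^sup>2 \<le> (4 ^ m)\<^sup>2 * (1 / t)"
      using \<open>t > 0\<close> \<open>s > 0\<close> by (simp add: field_simps power2_eq_square)
    then show ?thesis by (simp add: t_def s_def Hneg_wt_def Hpos_wt_def)
  qed
  then have "Hpos_wt pl m k * (cmod (diag_inv pl m \<mu> g k))\<^sup>2 \<le> (4 ^ m)\<^sup>2 * (Hneg_wt pl m k * (cmod (g k))\<^sup>2)" for k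
    unfolding Hpos_wt_diag_inv[OF \<mu>] mult.assoc[symmetric] by (rule mult_right_mono) simp
  from wl2_dominated[OF Hpos_wt_nonneg Hneg_wt_nonneg g _ this]
  show "wl2 (Hpos_wt pl m) (diag_inv pl m \<mu> g)"
    "wl2_norm (Hpos_wt pl m) (diag_inv pl m \<mu> g) \<le> 4 ^ m * wl2_norm (Hneg_wt pl m) g" by simp_all
qed

lemma diag_inv_L2_to_Hpos:
  assumes \<mu>: "\<mu> \<ge> 1" and g: "wl2 L2_wt g"
  shows "wl2 (Hpos_wt pl m) (diag_inv pl m \<mu> g)"
    "wl2_norm (Hpos_wt pl m) (diag_inv pl m \<mu> g) \<le> 2 ^ m / sqrt \<mu> * wl2_norm L2_wt g"
proof -
  have "Hpos_wt pl m k / (symb pl m k + \<mu>)\<^sup>2 \<le> (2 ^ m / sqrt \<mu>)\<^sup>2 * L2_wt k" for k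
  proof -
    define t where "t = Hpos_wt pl m k"
    define s where "s = symb pl m k + \<mu>"
    have "t > 0" "s > 0" using Hpos_wt_pos symb_nonneg[of pl m k] \<mu> by (auto simp: t_def s_def)
    have "t \<le> 4 ^ m * s" unfolding t_def s_def by (rule Hpos_wt_le_symb[OF \<mu>])
    moreover have "\<mu> \<le> s" using symb_nonneg[of pl m k] by (simp add: s_def)
    ultimately have "t * \<mu> \<le> (4 ^ m * s) * s" using \<mu> by (intro mult_mono) auto
    then have "t / s\<^sup>2 \<le> 4 ^ m / \<mu>"
      using \<open>t > 0\<close> \<open>s > 0\<close> \<mu> by (simp add: field_simps power2_eq_square)
    then show ?thesis using \<mu> by (simp add: t_def s_def L2_wt_def power_divide two_power_square)
  qed
  then have "Hpos_wt pl m k * (cmod (diag_inv pl m \<mu> g k))\<^sup>2 \<le> (2 ^ m / sqrt \<mu>)\<^sup>2 * (L2_wt k * (cmod (g k))\<^sup>2)" for k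
    unfolding Hpos_wt_diag_inv[OF \<mu>] mult.assoc[symmetric] by (rule mult_right_mono) simp
  from wl2_dominated[OF Hpos_wt_nonneg L2_wt_nonneg g _ this]
  show "wl2 (Hpos_wt pl m) (diag_inv pl m \<mu> g)"
    "wl2_norm (Hpos_wt pl m) (diag_inv pl m \<mu> g) \<le> 2 ^ m / sqrt \<mu> * wl2_norm L2_wt g"
    using \<mu> by simp_all
qed

lemma diag_inv_add: "diag_inv pl m \<mu> (\<lambda>n. a n + b n) = (\<lambda>k. diag_inv pl m \<mu> a k + diag_inv pl m \<mu> b k)"
  by (simp add: diag_inv_def add_divide_distrib fun_eq_iff)

lemma diag_inv_diff: "diag_inv pl m \<mu> (\<lambda>n. a n - b n) = (\<lambda>k. diag_inv pl m \<mu> a k - diag_inv pl m \<mu> b k)"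
  by (simp add: diag_inv_def diff_divide_distrib fun_eq_iff)

lemma diag_inv_pot_mult_Hpos:
  assumes m: "m \<ge> 1" and \<mu>: "\<mu> \<ge> 1" and x: "wl2 (Hneg_wt True m) x" and z: "wl2 (Hpos_wt pl m) z"
  shows "wl2 (Hpos_wt pl m) (diag_inv pl m \<mu> (pot_mult x z))"
    "wl2_norm (Hpos_wt pl m) (diag_inv pl m \<mu> (pot_mult x z))
       \<le> 4 ^ m * mult_const m * wl2_norm (Hneg_wt True m) x * wl2_norm (Hpos_wt pl m) z"
proof -
  note Hneg = pot_mult_Hneg[OF m x z]
  show "wl2 (Hpos_wt pl m) (diag_inv pl m \<mu> (pot_mult x z))"
    by (rule diag_inv_Hneg_to_Hpos(1)[OF \<mu> Hneg(1)])
  have "wl2_norm (Hpos_wt pl m) (diag_inv pl m \<mu> (pot_mult x z)) \<le> 4 ^ m * wl2_norm (Hneg_wt pl m) (pot_mult x z)"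
    by (rule diag_inv_Hneg_to_Hpos(2)[OF \<mu> Hneg(1)])
  also have "\<dots> \<le> 4 ^ m * (mult_const m * wl2_norm (Hneg_wt True m) x * wl2_norm (Hpos_wt pl m) z)"
    by (rule mult_left_mono[OF Hneg(2)]) simp
  finally show "wl2_norm (Hpos_wt pl m) (diag_inv pl m \<mu> (pot_mult x z))
       \<le> 4 ^ m * mult_const m * wl2_norm (Hneg_wt True m) x * wl2_norm (Hpos_wt pl m) z"
    by (simp add: mult_ac)
qed

lemma diag_inv_pot_mult_truncate:
  assumes \<mu>: "\<mu> \<ge> 1" and F: "finite F" and z: "wl2 (Hpos_wt pl m) z"
  shows "wl2 (Hpos_wt pl m) (diag_inv pl m \<mu> (pot_mult (truncate F W) z))"
    "wl2_norm (Hpos_wt pl m) (diag_inv pl m \<mu> (pot_mult (truncate F W) z))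
       \<le> 2 ^ m / sqrt \<mu> * (\<Sum>k\<in>F. cmod (W k)) * wl2_norm (Hpos_wt pl m) z"
proof -
  have summable: "\<And>n. (\<lambda>j. truncate F W (n - j) * z j) summable_on UNIV"
    by (rule pot_mult_summable[OF wl2_truncate[OF Hneg_wt_nonneg F] z])
  have supp: "\<And>k. k \<notin> F \<Longrightarrow> truncate F W k = 0" by (simp add: truncate_def)
  have "(\<Sum>k\<in>F. cmod (truncate F W k)) = (\<Sum>k\<in>F. cmod (W k))"
    by (rule sum.cong) (simp_all add: truncate_def)
  with pot_mult_L2_finite_support[OF F supp conjunct1[OF Hpos_imp_L2[OF z]] summable]
  have low: "wl2 L2_wt (pot_mult (truncate F W) z)"
      "wl2_norm L2_wt (pot_mult (truncate F W) z) \<le> (\<Sum>k\<in>F. cmod (W k)) * wl2_norm L2_wt z"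
    by simp_all
  show "wl2 (Hpos_wt pl m) (diag_inv pl m \<mu> (pot_mult (truncate F W) z))"
    by (rule diag_inv_L2_to_Hpos(1)[OF \<mu> low(1)])
  have "wl2_norm (Hpos_wt pl m) (diag_inv pl m \<mu> (pot_mult (truncate F W) z))
      \<le> 2 ^ m / sqrt \<mu> * wl2_norm L2_wt (pot_mult (truncate F W) z)"
    by (rule diag_inv_L2_to_Hpos(2)[OF \<mu> low(1)])
  also have "\<dots> \<le> 2 ^ m / sqrt \<mu> * ((\<Sum>k\<in>F. cmod (W k)) * wl2_norm (Hpos_wt pl m) z)"
    using low(2) conjunct2[OF Hpos_imp_L2[OF z]]
    using \<mu> by (intro mult_left_mono order.trans[OF low(2)] mult_left_mono) (simp_all add: sum_nonneg)
  finally show "wl2_norm (Hpos_wt pl m) (diag_inv pl m \<mu> (pot_mult (truncate F W) z))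
       \<le> 2 ^ m / sqrt \<mu> * (\<Sum>k\<in>F. cmod (W k)) * wl2_norm (Hpos_wt pl m) z" by (simp add: mult_ac)
qed

section \<open>The shifted operator \<open>S(X) + \<mu>\<close>\<close>

locale shifted_setting =
  fixes pl :: bool and m :: nat and W :: "int \<Rightarrow> complex"
    and F0 :: "int set" and \<delta> :: real and \<mu> :: real
  assumes m_ge_1: "m \<ge> 1"
    and W_Hneg: "wl2 (Hneg_wt True m) W"
    and F0: "finite F0"
    and \<delta>_nonneg: "\<delta> \<ge> 0"
    and \<delta>_small: "4 ^ m * mult_const m * (2 * \<delta>) \<le> 1/4"
    and W_tail: "wl2_norm (Hneg_wt True m) (\<lambda>k. W k - truncate F0 W k) \<le> \<delta>"
    and \<mu>_ge_1: "\<mu> \<ge> 1"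
    and \<mu>_large: "2 ^ m / sqrt \<mu> * (\<Sum>k\<in>F0. cmod (W k)) \<le> 1/4"
begin

definition near :: "(int \<Rightarrow> complex) \<Rightarrow> bool" where
  "near X \<longleftrightarrow> wl2 (Hneg_wt True m) X \<and> wl2_norm (Hneg_wt True m) (\<lambda>k. X k - W k) \<le> \<delta>"

lemma near_W: "near W"
  by (simp add: near_def W_Hneg \<delta>_nonneg wl2_norm_def)

abbreviation Q :: "(int \<Rightarrow> complex) \<Rightarrow> int \<Rightarrow> complex" where
  "Q \<equiv> diag_inv pl m \<mu>"

text \<open>The finitely many low modes of \<open>W\<close> are controlled by \<open>\<mu>\<close> in \<open>L\<^sub>2\<close>, the rest by its small
  \<open>H\<^sup>-\<^sup>m\<close>-norm: each part contributes at most \<open>1/4\<close>.\<close>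

lemma diag_inv_pot_mult_half:
  assumes X: "near X" and z: "wl2 (Hpos_wt pl m) z"
  shows "wl2 (Hpos_wt pl m) (Q (pot_mult X z))"
    "wl2_norm (Hpos_wt pl m) (Q (pot_mult X z)) \<le> 1/2 * wl2_norm (Hpos_wt pl m) z"
proof -
  define Xl where "Xl = truncate F0 W"
  define Xh where "Xh = (\<lambda>k. X k - Xl k)"
  have X_Hneg: "wl2 (Hneg_wt True m) X" using X by (simp add: near_def)
  have Xl: "wl2 (Hneg_wt True m) Xl" unfolding Xl_def by (rule wl2_truncate[OF Hneg_wt_nonneg F0])
  have Xh: "wl2 (Hneg_wt True m) Xh" unfolding Xh_def by (rule wl2_diff(1)[OF Hneg_wt_nonneg X_Hneg Xl])
  have "pot_mult X z = pot_mult (\<lambda>k. Xl k + Xh k) z" by (simp add: Xh_def)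
  then have split: "Q (pot_mult X z) = (\<lambda>k. Q (pot_mult Xl z) k + Q (pot_mult Xh z) k)"
    by (simp add: pot_mult_add_left[OF pot_mult_summable[OF Xl z] pot_mult_summable[OF Xh z]] diag_inv_add)
  note low = diag_inv_pot_mult_truncate[OF \<mu>_ge_1 F0 z, of W, folded Xl_def]
  note high = diag_inv_pot_mult_Hpos[OF m_ge_1 \<mu>_ge_1 Xh z]
  have z0: "wl2_norm (Hpos_wt pl m) z \<ge> 0" by (rule wl2_norm_nonneg[OF Hpos_wt_nonneg])
  have "wl2_norm (Hneg_wt True m) Xh \<le> wl2_norm (Hneg_wt True m) (\<lambda>k. X k - W k) + wl2_norm (Hneg_wt True m) (\<lambda>k. W k - Xl k)"
    unfolding Xh_def by (rule wl2_norm_diff_triangle[OF Hneg_wt_nonneg X_Hneg Xl W_Hneg])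
  also have "\<dots> \<le> 2 * \<delta>" using X W_tail by (simp add: near_def Xl_def)
  finally have "4 ^ m * mult_const m * wl2_norm (Hneg_wt True m) Xh \<le> 1/4"
    using \<delta>_small mult_const_nonneg by (smt (verit) mult_left_mono zero_le_power mult_nonneg_nonneg)
  then have "wl2_norm (Hpos_wt pl m) (Q (pot_mult Xh z)) \<le> 1/4 * wl2_norm (Hpos_wt pl m) z"
    using high(2) mult_right_mono[OF _ z0] by (smt (verit))
  moreover have "wl2_norm (Hpos_wt pl m) (Q (pot_mult Xl z)) \<le> 1/4 * wl2_norm (Hpos_wt pl m) z"
    using order.trans[OF low(2) mult_right_mono[OF \<mu>_large z0]] by simp
  moreover note wl2_add[OF Hpos_wt_nonneg low(1) high(1)]
  ultimately show "wl2 (Hpos_wt pl m) (Q (pot_mult X z))"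
    "wl2_norm (Hpos_wt pl m) (Q (pot_mult X z)) \<le> 1/2 * wl2_norm (Hpos_wt pl m) z"
    unfolding split by simp_all
qed

definition shift_eq :: "(int \<Rightarrow> complex) \<Rightarrow> (int \<Rightarrow> complex) \<Rightarrow> (int \<Rightarrow> complex) \<Rightarrow> bool" where
  "shift_eq X g u \<longleftrightarrow> wl2 (Hpos_wt pl m) u \<and> (\<forall>k. S_expr pl m X u k + complex_of_real \<mu> * u k = g k)"

lemma shift_eq_iff_fixpoint:
  "shift_eq X g u \<longleftrightarrow> wl2 (Hpos_wt pl m) u \<and> u = (\<lambda>k. Q g k - Q (pot_mult X u) k)"
proof -
  have "(S_expr pl m X u k + complex_of_real \<mu> * u k = g k) \<longleftrightarrow> (u k = Q g k - Q (pot_mult X u) k)" for k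
  proof -
    have "complex_of_real (symb pl m k + \<mu>) \<noteq> 0"
      using symb_nonneg[of pl m k] \<mu>_ge_1 by (simp del: of_real_add)
    moreover have "S_expr pl m X u k + complex_of_real \<mu> * u k
        = complex_of_real (symb pl m k + \<mu>) * u k + pot_mult X u k"
      by (simp add: S_expr_symb algebra_simps)
    ultimately show ?thesis unfolding diag_inv_def by (auto simp: field_simps simp del: of_real_add)
  qed
  then show ?thesis unfolding shift_eq_def by (auto simp: fun_eq_iff)
qed

lemma shift_eq_ex1:
  assumes X: "near X" and g: "wl2 (Hneg_wt pl m) g"
  shows "\<exists>!u. shift_eq X g u"
proof -
  have X_Hneg: "wl2 (Hneg_wt True m) X" using X by (simp add: near_def)
  define \<Phi> where "\<Phi> u = (\<lambda>k. Q g k - Q (pot_mult X u) k)" for u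
  have "\<exists>!u. wl2 (Hpos_wt pl m) u \<and> \<Phi> u = u"
  proof (rule wl2_contraction_fixpoint[OF Hpos_wt_pos, of "1/2"])
    show "wl2 (Hpos_wt pl m) (\<Phi> u)" if "wl2 (Hpos_wt pl m) u" for u
      unfolding \<Phi>_def
      by (rule wl2_diff(1)[OF Hpos_wt_nonneg diag_inv_Hneg_to_Hpos(1)[OF \<mu>_ge_1 g]
            diag_inv_pot_mult_half(1)[OF X that]])
    fix u v assume u: "wl2 (Hpos_wt pl m) u" and v: "wl2 (Hpos_wt pl m) v"
    have "(\<lambda>k. \<Phi> u k - \<Phi> v k) = Q (pot_mult X (\<lambda>j. v j - u j))"
      unfolding \<Phi>_def pot_mult_diff_right[OF pot_mult_summable[OF X_Hneg v] pot_mult_summable[OF X_Hneg u]]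
        diag_inv_diff by (simp add: fun_eq_iff)
    then show "wl2_norm (Hpos_wt pl m) (\<lambda>k. \<Phi> u k - \<Phi> v k) \<le> 1/2 * wl2_norm (Hpos_wt pl m) (\<lambda>k. u k - v k)"
      using diag_inv_pot_mult_half(2)[OF X wl2_diff(1)[OF Hpos_wt_nonneg v u]]
      by (simp add: wl2_norm_diff_commute[of _ v u])
  qed simp_all
  then show ?thesis unfolding shift_eq_iff_fixpoint \<Phi>_def by metis
qed

definition shift_inv :: "(int \<Rightarrow> complex) \<Rightarrow> (int \<Rightarrow> complex) \<Rightarrow> int \<Rightarrow> complex" where
  "shift_inv X g = (THE u. shift_eq X g u)"

lemma shift_eq_shift_inv: "near X \<Longrightarrow> wl2 (Hneg_wt pl m) g \<Longrightarrow> shift_eq X g (shift_inv X g)"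
  unfolding shift_inv_def by (rule theI'[OF shift_eq_ex1])

lemma shift_inv_eqI: "near X \<Longrightarrow> wl2 (Hneg_wt pl m) g \<Longrightarrow> shift_eq X g u \<Longrightarrow> shift_inv X g = u"
  unfolding shift_inv_def by (rule the1_equality[OF shift_eq_ex1])

lemma shift_inv_L2:
  assumes X: "near X" and g: "wl2 L2_wt g"
  shows "wl2 (Hpos_wt pl m) (shift_inv X g)" "wl2 L2_wt (shift_inv X g)"
    "wl2_norm (Hpos_wt pl m) (shift_inv X g) \<le> 2 ^ (m + 1) * wl2_norm L2_wt g"
    "wl2_norm L2_wt (shift_inv X g) \<le> 2 ^ (m + 1) * wl2_norm L2_wt g"
proof -
  define u where "u = shift_inv X g"
  have g_Hneg: "wl2 (Hneg_wt pl m) g" using L2_imp_Hneg[OF g] by simp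
  have u: "wl2 (Hpos_wt pl m) u" and fix_u: "u = (\<lambda>k. Q g k - Q (pot_mult X u) k)"
    using shift_eq_shift_inv[OF X g_Hneg] by (simp_all add: u_def shift_eq_iff_fixpoint)
  have "wl2_norm (Hpos_wt pl m) u \<le> wl2_norm (Hpos_wt pl m) (Q g) + wl2_norm (Hpos_wt pl m) (Q (pot_mult X u))"
    by (subst fix_u, rule wl2_diff(2)[OF Hpos_wt_nonneg diag_inv_Hneg_to_Hpos(1)[OF \<mu>_ge_1 g_Hneg]
          diag_inv_pot_mult_half(1)[OF X u]])
  also have "\<dots> \<le> 2 ^ m / sqrt \<mu> * wl2_norm L2_wt g + 1/2 * wl2_norm (Hpos_wt pl m) u"
    by (intro add_mono diag_inv_L2_to_Hpos(2)[OF \<mu>_ge_1 g] diag_inv_pot_mult_half(2)[OF X u])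
  also have "2 ^ m / sqrt \<mu> * wl2_norm L2_wt g \<le> 2 ^ m * wl2_norm L2_wt g"
    using \<mu>_ge_1 wl2_norm_nonneg[OF L2_wt_nonneg]
    by (intro mult_right_mono) (simp_all add: divide_le_eq)
  finally have "wl2_norm (Hpos_wt pl m) u \<le> 2 ^ (m + 1) * wl2_norm L2_wt g" by simp
  with u Hpos_imp_L2[OF u]
  show "wl2 (Hpos_wt pl m) (shift_inv X g)" "wl2 L2_wt (shift_inv X g)"
    "wl2_norm (Hpos_wt pl m) (shift_inv X g) \<le> 2 ^ (m + 1) * wl2_norm L2_wt g"
    "wl2_norm L2_wt (shift_inv X g) \<le> 2 ^ (m + 1) * wl2_norm L2_wt g"
    unfolding u_def by auto
qed

lemma shift_inv_diff:
  assumes X: "near X" and a: "wl2 L2_wt a" and b: "wl2 L2_wt b"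
  shows "shift_inv X (\<lambda>k. a k - b k) = (\<lambda>k. shift_inv X a k - shift_inv X b k)"
proof (rule shift_inv_eqI[OF X L2_imp_Hneg[OF wl2_diff(1)[OF L2_wt_nonneg a b], THEN conjunct1]])
  have X_Hneg: "wl2 (Hneg_wt True m) X" using X by (simp add: near_def)
  have u: "wl2 (Hpos_wt pl m) (shift_inv X a)" "wl2 (Hpos_wt pl m) (shift_inv X b)"
    using shift_inv_L2(1)[OF X a] shift_inv_L2(1)[OF X b] .
  show "shift_eq X (\<lambda>k. a k - b k) (\<lambda>k. shift_inv X a k - shift_inv X b k)"
    using shift_eq_shift_inv[OF X L2_imp_Hneg[OF a, THEN conjunct1]]
      shift_eq_shift_inv[OF X L2_imp_Hneg[OF b, THEN conjunct1]]
    unfolding shift_eq_def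
    by (auto simp: wl2_diff(1)[OF Hpos_wt_nonneg u] S_expr_def algebra_simps
        pot_mult_diff_right[OF pot_mult_summable[OF X_Hneg u(1)] pot_mult_summable[OF X_Hneg u(2)]])
qed

lemma shift_inv_cmult:
  assumes X: "near X" and a: "wl2 L2_wt a"
  shows "shift_inv X (\<lambda>k. c * a k) = (\<lambda>k. c * shift_inv X a k)"
proof (rule shift_inv_eqI[OF X L2_imp_Hneg[OF wl2_cmult(1)[OF a L2_wt_nonneg], THEN conjunct1]])
  have "S_expr pl m X (\<lambda>k. c * u k) k + complex_of_real \<mu> * (c * u k)
      = c * (S_expr pl m X u k + complex_of_real \<mu> * u k)" for u k
    by (simp add: S_expr_def pot_mult_cmult_right algebra_simps)
  then show "shift_eq X (\<lambda>k. c * a k) (\<lambda>k. c * shift_inv X a k)"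
    using shift_eq_shift_inv[OF X L2_imp_Hneg[OF a, THEN conjunct1]]
      wl2_cmult(1)[OF _ Hpos_wt_nonneg]
    unfolding shift_eq_def by simp
qed

lemma shift_inv_diff_bound:
  assumes X: "near X" and z: "wl2 L2_wt z"
  shows "wl2_norm (Hpos_wt pl m) (\<lambda>k. shift_inv X z k - shift_inv W z k)
           \<le> 2 * 4 ^ m * mult_const m * wl2_norm (Hneg_wt True m) (\<lambda>k. X k - W k)
               * wl2_norm (Hpos_wt pl m) (shift_inv W z)"
proof -
  have z_Hneg: "wl2 (Hneg_wt pl m) z" using L2_imp_Hneg[OF z] by simp
  have X_Hneg: "wl2 (Hneg_wt True m) X" using X by (simp add: near_def)
  define u where "u = shift_inv X z"
  define w where "w = shift_inv W z"
  have su: "shift_eq X z u" unfolding u_def by (rule shift_eq_shift_inv[OF X z_Hneg])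
  have sw: "shift_eq W z w" unfolding w_def by (rule shift_eq_shift_inv[OF near_W z_Hneg])
  have u: "wl2 (Hpos_wt pl m) u" and w: "wl2 (Hpos_wt pl m) w" using su sw by (simp_all add: shift_eq_def)
  have WX: "wl2 (Hneg_wt True m) (\<lambda>i. W i - X i)" by (rule wl2_diff(1)[OF Hneg_wt_nonneg W_Hneg X_Hneg])
  have uw: "wl2 (Hpos_wt pl m) (\<lambda>j. u j - w j)" by (rule wl2_diff(1)[OF Hpos_wt_nonneg u w])
  have resolvent_identity: "(\<lambda>k. u k - w k) = (\<lambda>k. Q (pot_mult (\<lambda>i. W i - X i) w) k - Q (pot_mult X (\<lambda>j. u j - w j)) k)"
  proof
    fix k
    have e1: "complex_of_real (symb pl m k + \<mu>) * u k + pot_mult X u k = z k"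
      using su unfolding shift_eq_def by (simp add: S_expr_symb algebra_simps)
    have e2: "complex_of_real (symb pl m k + \<mu>) * w k + pot_mult W w k = z k"
      using sw unfolding shift_eq_def by (simp add: S_expr_symb algebra_simps)
    have "complex_of_real (symb pl m k + \<mu>) \<noteq> 0"
      using symb_nonneg[of pl m k] \<mu>_ge_1 by (simp del: of_real_add)
    with e1 e2 show "u k - w k = Q (pot_mult (\<lambda>i. W i - X i) w) k - Q (pot_mult X (\<lambda>j. u j - w j)) k"
      unfolding pot_mult_diff_left[OF pot_mult_summable[OF W_Hneg w] pot_mult_summable[OF X_Hneg w]]
        pot_mult_diff_right[OF pot_mult_summable[OF X_Hneg u] pot_mult_summable[OF X_Hneg w]] diag_inv_def
      by (simp add: field_simps del: of_real_add)
  qed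
  note first = diag_inv_pot_mult_Hpos[OF m_ge_1 \<mu>_ge_1 WX w]
  have "wl2_norm (Hpos_wt pl m) (\<lambda>k. u k - w k)
      \<le> wl2_norm (Hpos_wt pl m) (Q (pot_mult (\<lambda>i. W i - X i) w)) + wl2_norm (Hpos_wt pl m) (Q (pot_mult X (\<lambda>j. u j - w j)))"
    by (subst resolvent_identity, rule wl2_diff(2)[OF Hpos_wt_nonneg first(1) diag_inv_pot_mult_half(1)[OF X uw]])
  also have "\<dots> \<le> 4 ^ m * mult_const m * wl2_norm (Hneg_wt True m) (\<lambda>i. W i - X i) * wl2_norm (Hpos_wt pl m) w
      + 1/2 * wl2_norm (Hpos_wt pl m) (\<lambda>j. u j - w j)"
    by (rule add_mono[OF first(2) diag_inv_pot_mult_half(2)[OF X uw]])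
  finally show ?thesis unfolding u_def w_def by (simp add: wl2_norm_diff_commute[of _ W X])
qed

definition shift_diff_const :: real where
  "shift_diff_const = 2 * 4 ^ m * mult_const m * 2 ^ (m + 1)"

lemma shift_diff_const_nonneg: "shift_diff_const \<ge> 0"
  by (simp add: shift_diff_const_def mult_const_nonneg)

lemma shift_inv_diff_L2:
  assumes X: "near X" and z: "wl2 L2_wt z"
  shows "wl2 L2_wt (\<lambda>k. shift_inv X z k - shift_inv W z k)"
    "wl2_norm L2_wt (\<lambda>k. shift_inv X z k - shift_inv W z k)
       \<le> shift_diff_const * wl2_norm (Hneg_wt True m) (\<lambda>k. X k - W k) * wl2_norm L2_wt z"
proof -
  have diff: "wl2 (Hpos_wt pl m) (\<lambda>k. shift_inv X z k - shift_inv W z k)"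
    by (rule wl2_diff(1)[OF Hpos_wt_nonneg shift_inv_L2(1)[OF X z] shift_inv_L2(1)[OF near_W z]])
  then show "wl2 L2_wt (\<lambda>k. shift_inv X z k - shift_inv W z k)" using Hpos_imp_L2 by blast
  have "wl2_norm L2_wt (\<lambda>k. shift_inv X z k - shift_inv W z k)
      \<le> wl2_norm (Hpos_wt pl m) (\<lambda>k. shift_inv X z k - shift_inv W z k)"
    using Hpos_imp_L2[OF diff] by simp
  also have "\<dots> \<le> 2 * 4 ^ m * mult_const m * wl2_norm (Hneg_wt True m) (\<lambda>k. X k - W k)
      * wl2_norm (Hpos_wt pl m) (shift_inv W z)"
    by (rule shift_inv_diff_bound[OF X z])
  also have "\<dots> \<le> 2 * 4 ^ m * mult_const m * wl2_norm (Hneg_wt True m) (\<lambda>k. X k - W k)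
      * (2 ^ (m + 1) * wl2_norm L2_wt z)"
    by (intro mult_left_mono shift_inv_L2(3)[OF near_W z])
      (simp add: mult_const_nonneg wl2_norm_nonneg[OF Hneg_wt_nonneg])
  finally show "wl2_norm L2_wt (\<lambda>k. shift_inv X z k - shift_inv W z k)
       \<le> shift_diff_const * wl2_norm (Hneg_wt True m) (\<lambda>k. X k - W k) * wl2_norm L2_wt z"
    by (simp add: shift_diff_const_def mult_ac)
qed

end

section \<open>Perturbation of the resolvent\<close>

definition res_sol :: "bool \<Rightarrow> nat \<Rightarrow> (int \<Rightarrow> complex) \<Rightarrow> complex \<Rightarrow> (int \<Rightarrow> complex) \<Rightarrow> (int \<Rightarrow> complex) \<Rightarrow> bool" where
  "res_sol pl m X lam f u \<longleftrightarrow> wl2 (Hpos_wt pl m) u \<and> (\<lambda>k. S_expr pl m X u k - lam * u k) = f"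

lemma S_dom_iff_res_sol:
  assumes f: "wl2 L2_wt f"
  shows "(u \<in> S_dom pl m X \<and> (\<lambda>k. S_expr pl m X u k - lam * u k) = f) \<longleftrightarrow> res_sol pl m X lam f u"
proof -
  have "wl2 L2_wt (S_expr pl m X u)" if u: "wl2 (Hpos_wt pl m) u" and e: "(\<lambda>k. S_expr pl m X u k - lam * u k) = f"
  proof -
    have "S_expr pl m X u = (\<lambda>k. f k + lam * u k)" using e by (auto simp: fun_eq_iff algebra_simps)
    then show ?thesis
      using wl2_add(1)[OF L2_wt_nonneg f wl2_cmult(1)[OF conjunct1[OF Hpos_imp_L2[OF u]] L2_wt_nonneg]] by simp
  qed
  then show ?thesis by (auto simp: S_dom_def res_sol_def in_H_nat in_H_0)
qed

lemma resolvent_set_iff: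
  "lam \<in> resolvent_set pl m X \<longleftrightarrow>
     (\<forall>f. wl2 L2_wt f \<longrightarrow> (\<exists>!u. res_sol pl m X lam f u)) \<and>
     (\<exists>C. \<forall>f u. wl2 L2_wt f \<longrightarrow> res_sol pl m X lam f u \<longrightarrow> wl2_norm L2_wt u \<le> C * wl2_norm L2_wt f)"
proof -
  have "wl2 L2_wt f \<Longrightarrow> (u \<in> S_dom pl m X \<longrightarrow> (\<lambda>k. S_expr pl m X u k - lam * u k) = f \<longrightarrow> P)
      = (res_sol pl m X lam f u \<longrightarrow> P)" for f u P
    using S_dom_iff_res_sol[of f] by blast
  then show ?thesis unfolding resolvent_set_def in_H_0 by (simp add: S_dom_iff_res_sol cong: imp_cong)
qed

lemma resolvent_THE:
  assumes "wl2 L2_wt f"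
  shows "resolvent pl m X lam f = (THE u. res_sol pl m X lam f u)"
  unfolding resolvent_def using S_dom_iff_res_sol[OF assms] by simp

lemma resolvent_ex1:
  assumes "lam \<in> resolvent_set pl m X" "wl2 L2_wt f"
  shows "\<exists>!u. res_sol pl m X lam f u"
  using assms unfolding resolvent_set_iff by blast

lemma resolvent_res_sol:
  assumes "lam \<in> resolvent_set pl m X" "wl2 L2_wt f"
  shows "res_sol pl m X lam f (resolvent pl m X lam f)"
  unfolding resolvent_THE[OF assms(2)] by (rule theI'[OF resolvent_ex1[OF assms]])

lemma resolvent_eqI:
  assumes "lam \<in> resolvent_set pl m X" "wl2 L2_wt f" "res_sol pl m X lam f u"
  shows "resolvent pl m X lam f = u"
  unfolding resolvent_THE[OF assms(2)] by (rule the1_equality[OF resolvent_ex1[OF assms(1,2)]]) (rule assms(3))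

lemma opnorm_diff_bounds:
  assumes "c \<ge> 0" and bound: "\<And>f. wl2 L2_wt f \<Longrightarrow> wl2_norm L2_wt (\<lambda>k. A f k - B f k) \<le> c * wl2_norm L2_wt f"
  shows "0 \<le> opnorm_diff pl A B" "opnorm_diff pl A B \<le> c"
proof -
  define S where "S = {wl2_norm L2_wt (\<lambda>k. A f k - B f k) | f. wl2 L2_wt f \<and> wl2_norm L2_wt f \<le> 1}"
  have opnorm: "opnorm_diff pl A B = Sup S" by (simp add: opnorm_diff_def S_def in_H_0)
  have zero: "wl2_norm L2_wt (\<lambda>k. A (\<lambda>k. 0) k - B (\<lambda>k. 0) k) \<in> S"
    unfolding S_def using wl2_zero[of L2_wt] by auto
  have le_c: "x \<le> c" if "x \<in> S" for x
  proof -
    obtain f where f: "wl2 L2_wt f" "wl2_norm L2_wt f \<le> 1" and x: "x = wl2_norm L2_wt (\<lambda>k. A f k - B f k)"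
      using \<open>x \<in> S\<close> unfolding S_def by blast
    have "x \<le> c * wl2_norm L2_wt f" using bound[OF f(1)] x by simp
    also have "\<dots> \<le> c" using mult_left_mono[OF f(2) \<open>c \<ge> 0\<close>] by simp
    finally show ?thesis .
  qed
  show "opnorm_diff pl A B \<le> c" unfolding opnorm by (rule cSup_least) (use zero le_c in auto)
  have "0 \<le> wl2_norm L2_wt (\<lambda>k. A (\<lambda>k. 0) k - B (\<lambda>k. 0) k)" by (rule wl2_norm_nonneg[OF L2_wt_nonneg])
  also have "\<dots> \<le> Sup S" by (rule cSup_upper[OF zero bdd_aboveI[of S c]]) (rule le_c)
  finally show "0 \<le> opnorm_diff pl A B" unfolding opnorm .
qed

locale resolvent_setting = shifted_setting +
  fixes lam :: complex
  assumes lam_res: "lam \<in> resolvent_set pl m W"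
begin

abbreviation R :: "(int \<Rightarrow> complex) \<Rightarrow> int \<Rightarrow> complex" where
  "R \<equiv> resolvent pl m W lam"

definition \<nu> :: complex where
  "\<nu> = lam + complex_of_real \<mu>"

lemma R_res_sol: "wl2 L2_wt f \<Longrightarrow> res_sol pl m W lam f (R f)"
  by (rule resolvent_res_sol[OF lam_res])

lemma R_L2: "wl2 L2_wt f \<Longrightarrow> wl2 L2_wt (R f)"
  using Hpos_imp_L2 R_res_sol unfolding res_sol_def by blast

definition R_bound :: real where
  "R_bound = (SOME C. C \<ge> 0 \<and> (\<forall>f. wl2 L2_wt f \<longrightarrow> wl2_norm L2_wt (R f) \<le> C * wl2_norm L2_wt f))"

lemma R_bound: "R_bound \<ge> 0" "wl2 L2_wt f \<Longrightarrow> wl2_norm L2_wt (R f) \<le> R_bound * wl2_norm L2_wt f"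
proof -
  obtain C where C: "\<And>f u. wl2 L2_wt f \<Longrightarrow> res_sol pl m W lam f u \<Longrightarrow> wl2_norm L2_wt u \<le> C * wl2_norm L2_wt f"
    using lam_res unfolding resolvent_set_iff by blast
  have "wl2_norm L2_wt (R f) \<le> max C 0 * wl2_norm L2_wt f" if "wl2 L2_wt f" for f
    using C[OF that R_res_sol[OF that]] wl2_norm_nonneg[of L2_wt f, OF L2_wt_nonneg]
    by (smt (verit) mult_right_mono)
  then have "\<exists>C. C \<ge> 0 \<and> (\<forall>f. wl2 L2_wt f \<longrightarrow> wl2_norm L2_wt (R f) \<le> C * wl2_norm L2_wt f)"
    by (intro exI[of _ "max C 0"]) simp
  then have "R_bound \<ge> 0 \<and> (\<forall>f. wl2 L2_wt f \<longrightarrow> wl2_norm L2_wt (R f) \<le> R_bound * wl2_norm L2_wt f)"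
    unfolding R_bound_def by (rule someI_ex)
  then show "R_bound \<ge> 0" "wl2 L2_wt f \<Longrightarrow> wl2_norm L2_wt (R f) \<le> R_bound * wl2_norm L2_wt f" by auto
qed

lemma S_expr_W_diff:
  assumes "wl2 (Hpos_wt pl m) a" "wl2 (Hpos_wt pl m) b"
  shows "S_expr pl m W (\<lambda>k. a k - b k) = (\<lambda>k. S_expr pl m W a k - S_expr pl m W b k)"
  using pot_mult_diff_right[OF pot_mult_summable[OF W_Hneg assms(1)] pot_mult_summable[OF W_Hneg assms(2)]]
  by (simp add: S_expr_def fun_eq_iff algebra_simps)

lemma R_diff:
  assumes a: "wl2 L2_wt a" and b: "wl2 L2_wt b"
  shows "R (\<lambda>k. a k - b k) = (\<lambda>k. R a k - R b k)"
proof (rule resolvent_eqI[OF lam_res wl2_diff(1)[OF L2_wt_nonneg a b]])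
  have u: "wl2 (Hpos_wt pl m) (R a)" "wl2 (Hpos_wt pl m) (R b)"
    and e: "(\<lambda>k. S_expr pl m W (R a) k - lam * R a k) = a" "(\<lambda>k. S_expr pl m W (R b) k - lam * R b k) = b"
    using R_res_sol[OF a] R_res_sol[OF b] by (simp_all add: res_sol_def)
  show "res_sol pl m W lam (\<lambda>k. a k - b k) (\<lambda>k. R a k - R b k)"
    unfolding res_sol_def S_expr_W_diff[OF u] using wl2_diff(1)[OF Hpos_wt_nonneg u] e
    by (auto simp: fun_eq_iff algebra_simps)
qed

text \<open>\<open>M = I + \<nu> R(\<lambda>, S) = (S + \<mu>) R(\<lambda>, S)\<close> is the inverse of \<open>I - \<nu> (S + \<mu>)\<inverse>\<close> on \<open>L\<^sub>2\<close>.\<close>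

definition M :: "(int \<Rightarrow> complex) \<Rightarrow> int \<Rightarrow> complex" where
  "M y = (\<lambda>k. y k + \<nu> * R y k)"

definition M_bound :: real where
  "M_bound = 1 + cmod \<nu> * R_bound"

lemma M_bound_ge_1: "M_bound \<ge> 1"
  using R_bound(1) by (simp add: M_bound_def)

lemma M_L2:
  assumes y: "wl2 L2_wt y"
  shows "wl2 L2_wt (M y)" "wl2_norm L2_wt (M y) \<le> M_bound * wl2_norm L2_wt y"
proof -
  note r = wl2_cmult[OF R_L2[OF y] L2_wt_nonneg, of \<nu>]
  show "wl2 L2_wt (M y)" unfolding M_def by (rule wl2_add(1)[OF L2_wt_nonneg y r(1)])
  have "wl2_norm L2_wt (M y) \<le> wl2_norm L2_wt y + cmod \<nu> * wl2_norm L2_wt (R y)"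
    unfolding M_def using wl2_add(2)[OF L2_wt_nonneg y r(1)] r(2) by simp
  also have "\<dots> \<le> wl2_norm L2_wt y + cmod \<nu> * (R_bound * wl2_norm L2_wt y)"
    by (intro add_left_mono mult_left_mono R_bound(2)[OF y]) simp
  finally show "wl2_norm L2_wt (M y) \<le> M_bound * wl2_norm L2_wt y" by (simp add: M_bound_def algebra_simps)
qed

lemma M_diff:
  assumes "wl2 L2_wt a" "wl2 L2_wt b"
  shows "M (\<lambda>k. a k - b k) = (\<lambda>k. M a k - M b k)"
  unfolding M_def R_diff[OF assms] by (simp add: fun_eq_iff algebra_simps)

lemma M_zero: "M (\<lambda>k. 0) = (\<lambda>k. 0)"
proof -
  have "R (\<lambda>k. 0) = (\<lambda>k. 0)"
    by (rule resolvent_eqI[OF lam_res wl2_zero(1)]) (simp add: res_sol_def wl2_zero S_expr_def pot_mult_zero_right)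
  then show ?thesis by (simp add: M_def)
qed

lemma res_sol_iff_shift_eq:
  fixes X f v :: "int \<Rightarrow> complex"
  shows "res_sol pl m X lam f v \<longleftrightarrow> shift_eq X (\<lambda>k. f k + \<nu> * v k) v"
proof -
  have "(S_expr pl m X v k + complex_of_real \<mu> * v k = f k + \<nu> * v k) \<longleftrightarrow> (S_expr pl m X v k - lam * v k = f k)" for k
    by (auto simp: \<nu>_def algebra_simps)
  then show ?thesis unfolding res_sol_def shift_eq_def fun_eq_iff by simp
qed

lemma M_shift_inv:
  assumes z: "wl2 L2_wt z"
  shows "M (\<lambda>k. z k - \<nu> * shift_inv W z k) = z"
proof -
  have s: "shift_eq W z (shift_inv W z)" by (rule shift_eq_shift_inv[OF near_W L2_imp_Hneg[OF z, THEN conjunct1]])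
  have "R (\<lambda>k. z k - \<nu> * shift_inv W z k) = shift_inv W z"
  proof (rule resolvent_eqI[OF lam_res])
    show "wl2 L2_wt (\<lambda>k. z k - \<nu> * shift_inv W z k)"
      by (rule wl2_diff(1)[OF L2_wt_nonneg z wl2_cmult(1)[OF shift_inv_L2(2)[OF near_W z] L2_wt_nonneg]])
    show "res_sol pl m W lam (\<lambda>k. z k - \<nu> * shift_inv W z k) (shift_inv W z)"
      unfolding res_sol_iff_shift_eq using s by simp
  qed
  then show ?thesis unfolding M_def by simp
qed

lemma M_eq_0_imp:
  assumes y: "wl2 L2_wt y" and "M y = (\<lambda>k. 0)"
  shows "y = (\<lambda>k. 0)"
proof -
  have y_eq: "y k = - \<nu> * R y k" for k using fun_cong[OF assms(2), of k] by (simp add: M_def eq_neg_iff_add_eq_0)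
  have "shift_eq W (\<lambda>k. 0) (R y)"
    using R_res_sol[OF y] y_eq unfolding res_sol_def shift_eq_def by (auto simp: fun_eq_iff \<nu>_def algebra_simps)
  moreover have "shift_eq W (\<lambda>k. 0) (\<lambda>k. 0)"
    by (simp add: shift_eq_def wl2_zero S_expr_def pot_mult_zero_right)
  ultimately have "R y = (\<lambda>k. 0)"
    using shift_inv_eqI[OF near_W wl2_zero(1)] by metis
  then show ?thesis using y_eq by (simp add: fun_eq_iff)
qed

text \<open>The fixed points of \<open>\<Psi> X f\<close> are the solutions of \<open>(S(X) - \<lambda>) v = f\<close>; for \<open>X\<close> close to \<open>W\<close>,
  \<open>\<Psi> X f\<close> is a contraction of \<open>L\<^sub>2\<close> because \<open>\<Psi> W f\<close> is constant.\<close>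

definition \<Psi> :: "(int \<Rightarrow> complex) \<Rightarrow> (int \<Rightarrow> complex) \<Rightarrow> (int \<Rightarrow> complex) \<Rightarrow> int \<Rightarrow> complex" where
  "\<Psi> X f v = (\<lambda>k. v k - M (\<lambda>j. v j - shift_inv X (\<lambda>i. f i + \<nu> * v i) j) k)"

lemma shifted_rhs_L2: "wl2 L2_wt f \<Longrightarrow> wl2 L2_wt v \<Longrightarrow> wl2 L2_wt (\<lambda>i. f i + \<nu> * v i)"
  by (rule wl2_add(1)[OF L2_wt_nonneg _ wl2_cmult(1)[OF _ L2_wt_nonneg]])

lemma \<Psi>_defect_L2:
  assumes "near X" "wl2 L2_wt f" "wl2 L2_wt v"
  shows "wl2 L2_wt (\<lambda>j. v j - shift_inv X (\<lambda>i. f i + \<nu> * v i) j)"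
  by (rule wl2_diff(1)[OF L2_wt_nonneg assms(3) shift_inv_L2(2)[OF assms(1) shifted_rhs_L2[OF assms(2,3)]]])

lemma \<Psi>_L2: "near X \<Longrightarrow> wl2 L2_wt f \<Longrightarrow> wl2 L2_wt v \<Longrightarrow> wl2 L2_wt (\<Psi> X f v)"
  unfolding \<Psi>_def by (rule wl2_diff(1)[OF L2_wt_nonneg _ M_L2(1)[OF \<Psi>_defect_L2]])

lemma \<Psi>_fixpoint_iff:
  assumes X: "near X" and f: "wl2 L2_wt f" and v: "wl2 L2_wt v"
  shows "\<Psi> X f v = v \<longleftrightarrow> res_sol pl m X lam f v"
proof -
  have g: "wl2 (Hneg_wt pl m) (\<lambda>i. f i + \<nu> * v i)"
    using L2_imp_Hneg[OF shifted_rhs_L2[OF f v]] by simp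
  have "\<Psi> X f v = v \<longleftrightarrow> M (\<lambda>j. v j - shift_inv X (\<lambda>i. f i + \<nu> * v i) j) = (\<lambda>k. 0)"
    unfolding \<Psi>_def by (auto simp: fun_eq_iff)
  also have "\<dots> \<longleftrightarrow> (\<lambda>j. v j - shift_inv X (\<lambda>i. f i + \<nu> * v i) j) = (\<lambda>k. 0)"
  proof
    assume "M (\<lambda>j. v j - shift_inv X (\<lambda>i. f i + \<nu> * v i) j) = (\<lambda>k. 0)"
    then show "(\<lambda>j. v j - shift_inv X (\<lambda>i. f i + \<nu> * v i) j) = (\<lambda>k. 0)"
      by (rule M_eq_0_imp[OF \<Psi>_defect_L2[OF X f v]])
  qed (simp only: M_zero)
  also have "\<dots> \<longleftrightarrow> shift_inv X (\<lambda>i. f i + \<nu> * v i) = v"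
    unfolding fun_eq_iff right_minus_eq by (metis (mono_tags))
  also have "\<dots> \<longleftrightarrow> shift_eq X (\<lambda>i. f i + \<nu> * v i) v"
    using shift_eq_shift_inv[OF X g] shift_inv_eqI[OF X g] by metis
  finally show ?thesis unfolding res_sol_iff_shift_eq .
qed

lemma \<Psi>_diff_eq:
  assumes X: "near X" and f: "wl2 L2_wt f" and v: "wl2 L2_wt v" and v': "wl2 L2_wt v'"
  shows "(\<lambda>k. \<Psi> X f v k - \<Psi> X f v' k)
           = M (\<lambda>k. \<nu> * (shift_inv X (\<lambda>j. v j - v' j) k - shift_inv W (\<lambda>j. v j - v' j) k))"
proof -
  define z where "z = (\<lambda>k. v k - v' k)"
  have z: "wl2 L2_wt z" unfolding z_def by (rule wl2_diff(1)[OF L2_wt_nonneg v v'])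
  have Tz: "wl2 L2_wt (shift_inv Y z)" if "near Y" for Y by (rule shift_inv_L2(2)[OF that z])
  have g: "wl2 L2_wt (\<lambda>i. f i + \<nu> * v i)" "wl2 L2_wt (\<lambda>i. f i + \<nu> * v' i)"
    by (rule shifted_rhs_L2[OF f v], rule shifted_rhs_L2[OF f v'])
  have "(\<lambda>k. (f k + \<nu> * v k) - (f k + \<nu> * v' k)) = (\<lambda>k. \<nu> * z k)"
    by (simp add: z_def fun_eq_iff algebra_simps)
  then have "(\<lambda>k. shift_inv X (\<lambda>i. f i + \<nu> * v i) k - shift_inv X (\<lambda>i. f i + \<nu> * v' i) k) = (\<lambda>k. \<nu> * shift_inv X z k)"
    using shift_inv_diff[OF X g] shift_inv_cmult[OF X z, of \<nu>] by simp
  then have "(\<lambda>k. \<Psi> X f v k - \<Psi> X f v' k) = (\<lambda>k. z k - M (\<lambda>k. z k - \<nu> * shift_inv X z k) k)"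
    unfolding \<Psi>_def using M_diff[OF \<Psi>_defect_L2[OF X f v] \<Psi>_defect_L2[OF X f v']]
    by (simp add: z_def fun_eq_iff algebra_simps)
  also have "\<dots> = (\<lambda>k. M (\<lambda>k. z k - \<nu> * shift_inv W z k) k - M (\<lambda>k. z k - \<nu> * shift_inv X z k) k)"
    by (simp add: M_shift_inv[OF z])
  also have "\<dots> = M (\<lambda>k. \<nu> * (shift_inv X z k - shift_inv W z k))"
    using M_diff[OF wl2_diff(1)[OF L2_wt_nonneg z wl2_cmult(1)[OF Tz[OF near_W] L2_wt_nonneg]]
        wl2_diff(1)[OF L2_wt_nonneg z wl2_cmult(1)[OF Tz[OF X] L2_wt_nonneg]]]
    by (simp add: algebra_simps)
  finally show ?thesis unfolding z_def .
qed

lemma \<Psi>_lipschitz: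
  assumes X: "near X" and f: "wl2 L2_wt f" and v: "wl2 L2_wt v" and v': "wl2 L2_wt v'"
  shows "wl2_norm L2_wt (\<lambda>k. \<Psi> X f v k - \<Psi> X f v' k)
           \<le> M_bound * cmod \<nu> * shift_diff_const * wl2_norm (Hneg_wt True m) (\<lambda>k. X k - W k)
               * wl2_norm L2_wt (\<lambda>k. v k - v' k)"
proof -
  have z: "wl2 L2_wt (\<lambda>k. v k - v' k)" by (rule wl2_diff(1)[OF L2_wt_nonneg v v'])
  note d = shift_inv_diff_L2[OF X z]
  note q = wl2_cmult[OF d(1) L2_wt_nonneg, of \<nu>]
  have "wl2_norm L2_wt (\<lambda>k. \<Psi> X f v k - \<Psi> X f v' k)
      \<le> M_bound * (cmod \<nu> * wl2_norm L2_wt (\<lambda>k. shift_inv X (\<lambda>j. v j - v' j) k - shift_inv W (\<lambda>j. v j - v' j) k))"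
    unfolding \<Psi>_diff_eq[OF X f v v'] using M_L2(2)[OF q(1)] q(2) by simp
  also have "\<dots> \<le> M_bound * (cmod \<nu> * (shift_diff_const * wl2_norm (Hneg_wt True m) (\<lambda>k. X k - W k)
      * wl2_norm L2_wt (\<lambda>k. v k - v' k)))"
    using M_bound_ge_1 by (intro mult_left_mono d(2)) simp_all
  finally show ?thesis by (simp add: mult_ac)
qed

lemma \<Psi>_perturbation:
  assumes X: "near X" and f: "wl2 L2_wt f" and v: "wl2 L2_wt v"
  shows "wl2_norm L2_wt (\<lambda>k. \<Psi> X f v k - \<Psi> W f v k)
           \<le> M_bound * shift_diff_const * wl2_norm (Hneg_wt True m) (\<lambda>k. X k - W k)
               * wl2_norm L2_wt (\<lambda>i. f i + \<nu> * v i)"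
proof -
  define g where "g = (\<lambda>i. f i + \<nu> * v i)"
  have g: "wl2 L2_wt g" unfolding g_def by (rule shifted_rhs_L2[OF f v])
  note d = shift_inv_diff_L2[OF X g]
  have "(\<lambda>k. \<Psi> X f v k - \<Psi> W f v k) = M (\<lambda>k. shift_inv X g k - shift_inv W g k)"
    using M_diff[OF \<Psi>_defect_L2[OF near_W f v] \<Psi>_defect_L2[OF X f v]]
    by (simp add: \<Psi>_def g_def fun_eq_iff)
  then have "wl2_norm L2_wt (\<lambda>k. \<Psi> X f v k - \<Psi> W f v k) \<le> M_bound * wl2_norm L2_wt (\<lambda>k. shift_inv X g k - shift_inv W g k)"
    using M_L2(2)[OF d(1)] by simp
  also have "\<dots> \<le> M_bound * (shift_diff_const * wl2_norm (Hneg_wt True m) (\<lambda>k. X k - W k) * wl2_norm L2_wt g)"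
    using M_bound_ge_1 by (intro mult_left_mono d(2)) simp
  finally show ?thesis by (simp add: g_def mult_ac)
qed

definition lip_const :: real where
  "lip_const = M_bound * cmod \<nu> * shift_diff_const"

definition diff_const :: real where
  "diff_const = 2 * M_bound * shift_diff_const * (1 + cmod \<nu> * R_bound)"

lemma lip_const_nonneg: "lip_const \<ge> 0"
  using M_bound_ge_1 shift_diff_const_nonneg by (simp add: lip_const_def)

lemma diff_const_nonneg: "diff_const \<ge> 0"
  using M_bound_ge_1 shift_diff_const_nonneg R_bound(1) by (simp add: diff_const_def)

context
  fixes X :: "int \<Rightarrow> complex"
  assumes X: "near X"
    and small: "lip_const * wl2_norm (Hneg_wt True m) (\<lambda>k. X k - W k) \<le> 1/2"
begin

lemma \<Psi>_contraction:
  assumes "wl2 L2_wt f" "wl2 L2_wt v" "wl2 L2_wt v'"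
  shows "wl2_norm L2_wt (\<lambda>k. \<Psi> X f v k - \<Psi> X f v' k) \<le> 1/2 * wl2_norm L2_wt (\<lambda>k. v k - v' k)"
proof -
  have "lip_const * wl2_norm (Hneg_wt True m) (\<lambda>k. X k - W k) * wl2_norm L2_wt (\<lambda>k. v k - v' k)
      \<le> 1/2 * wl2_norm L2_wt (\<lambda>k. v k - v' k)"
    by (rule mult_right_mono[OF small wl2_norm_nonneg[OF L2_wt_nonneg]])
  with \<Psi>_lipschitz[OF X assms] show ?thesis unfolding lip_const_def by linarith
qed

lemma near_res_sol_ex1:
  assumes f: "wl2 L2_wt f"
  shows "\<exists>!u. res_sol pl m X lam f u"
proof -
  have "\<exists>!v. wl2 L2_wt v \<and> \<Psi> X f v = v"
  proof (rule wl2_contraction_fixpoint[OF L2_wt_pos, of "1/2"])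
    show "wl2 L2_wt (\<Psi> X f v)" if "wl2 L2_wt v" for v by (rule \<Psi>_L2[OF X f that])
    show "wl2_norm L2_wt (\<lambda>k. \<Psi> X f v k - \<Psi> X f v' k) \<le> 1/2 * wl2_norm L2_wt (\<lambda>k. v k - v' k)"
      if "wl2 L2_wt v" "wl2 L2_wt v'" for v v' by (rule \<Psi>_contraction[OF f that])
  qed simp_all
  moreover have "res_sol pl m X lam f v \<longleftrightarrow> wl2 L2_wt v \<and> \<Psi> X f v = v" for v
  proof
    assume v: "res_sol pl m X lam f v"
    then have "wl2 L2_wt v" using Hpos_imp_L2 unfolding res_sol_def by blast
    with v show "wl2 L2_wt v \<and> \<Psi> X f v = v" using \<Psi>_fixpoint_iff[OF X f] by simp
  qed (use \<Psi>_fixpoint_iff[OF X f] in blast)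
  ultimately show ?thesis by simp
qed

lemma near_res_sol_close:
  assumes f: "wl2 L2_wt f" and u: "res_sol pl m X lam f u"
  shows "wl2_norm L2_wt (\<lambda>k. u k - R f k) \<le> diff_const * wl2_norm (Hneg_wt True m) (\<lambda>k. X k - W k) * wl2_norm L2_wt f"
proof -
  define e where "e = wl2_norm (Hneg_wt True m) (\<lambda>k. X k - W k)"
  have uL2: "wl2 L2_wt u" using u Hpos_imp_L2 unfolding res_sol_def by blast
  have RL2: "wl2 L2_wt (R f)" by (rule R_L2[OF f])
  have fix_u: "\<Psi> X f u = u" using \<Psi>_fixpoint_iff[OF X f uL2] u by simp
  have fix_R: "\<Psi> W f (R f) = R f" using \<Psi>_fixpoint_iff[OF near_W f RL2] R_res_sol[OF f] by simp
  have "wl2_norm L2_wt (\<lambda>i. f i + \<nu> * R f i) \<le> wl2_norm L2_wt f + cmod \<nu> * wl2_norm L2_wt (R f)"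
    using wl2_add(2)[OF L2_wt_nonneg f wl2_cmult(1)[OF RL2 L2_wt_nonneg]] wl2_cmult(2)[OF RL2 L2_wt_nonneg] by simp
  also have "\<dots> \<le> (1 + cmod \<nu> * R_bound) * wl2_norm L2_wt f"
    using mult_left_mono[OF R_bound(2)[OF f], of "cmod \<nu>"] by (simp add: algebra_simps)
  finally have rhs: "wl2_norm L2_wt (\<lambda>i. f i + \<nu> * R f i) \<le> (1 + cmod \<nu> * R_bound) * wl2_norm L2_wt f" .
  have "wl2_norm L2_wt (\<lambda>k. u k - R f k)
      \<le> wl2_norm L2_wt (\<lambda>k. u k - \<Psi> X f (R f) k) + wl2_norm L2_wt (\<lambda>k. \<Psi> X f (R f) k - R f k)"
    by (rule wl2_norm_diff_triangle[OF L2_wt_nonneg uL2 RL2 \<Psi>_L2[OF X f RL2]])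
  also have "\<dots> \<le> 1/2 * wl2_norm L2_wt (\<lambda>k. u k - R f k)
      + M_bound * shift_diff_const * e * ((1 + cmod \<nu> * R_bound) * wl2_norm L2_wt f)"
  proof (rule add_mono)
    show "wl2_norm L2_wt (\<lambda>k. u k - \<Psi> X f (R f) k) \<le> 1/2 * wl2_norm L2_wt (\<lambda>k. u k - R f k)"
      using \<Psi>_contraction[OF f uL2 RL2] fix_u by simp
    have "0 \<le> M_bound * shift_diff_const * e"
      using M_bound_ge_1 shift_diff_const_nonneg wl2_norm_nonneg[OF Hneg_wt_nonneg] by (simp add: e_def)
    have "wl2_norm L2_wt (\<lambda>k. \<Psi> X f (R f) k - R f k)
        \<le> M_bound * shift_diff_const * e * wl2_norm L2_wt (\<lambda>i. f i + \<nu> * R f i)"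
      using \<Psi>_perturbation[OF X f RL2] unfolding fix_R e_def .
    also have "\<dots> \<le> M_bound * shift_diff_const * e * ((1 + cmod \<nu> * R_bound) * wl2_norm L2_wt f)"
      by (rule mult_left_mono[OF rhs \<open>0 \<le> M_bound * shift_diff_const * e\<close>])
    finally show "wl2_norm L2_wt (\<lambda>k. \<Psi> X f (R f) k - R f k)
        \<le> M_bound * shift_diff_const * e * ((1 + cmod \<nu> * R_bound) * wl2_norm L2_wt f)" .
  qed
  finally show ?thesis unfolding diff_const_def e_def by (simp add: algebra_simps)
qed

lemma near_resolvent_set: "lam \<in> resolvent_set pl m X"
  unfolding resolvent_set_iff
proof (intro conjI allI impI exI)
  show "\<exists>!u. res_sol pl m X lam f u" if "wl2 L2_wt f" for f by (rule near_res_sol_ex1[OF that])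
  fix f u assume f: "wl2 L2_wt f" and u: "res_sol pl m X lam f u"
  have uL2: "wl2 L2_wt u" using u Hpos_imp_L2 unfolding res_sol_def by blast
  have "wl2_norm L2_wt u \<le> wl2_norm L2_wt (\<lambda>k. u k - R f k) + wl2_norm L2_wt (\<lambda>k. R f k - 0)"
    using wl2_norm_diff_triangle[OF L2_wt_nonneg uL2 wl2_zero(1) R_L2[OF f]] by simp
  also have "\<dots> \<le> diff_const * wl2_norm (Hneg_wt True m) (\<lambda>k. X k - W k) * wl2_norm L2_wt f + R_bound * wl2_norm L2_wt f"
    using near_res_sol_close[OF f u] R_bound(2)[OF f] by simp
  finally show "wl2_norm L2_wt u \<le> (diff_const * wl2_norm (Hneg_wt True m) (\<lambda>k. X k - W k) + R_bound) * wl2_norm L2_wt f"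
    by (simp add: algebra_simps)
qed

lemma near_resolvent_close:
  "wl2 L2_wt f \<Longrightarrow> wl2_norm L2_wt (\<lambda>k. resolvent pl m X lam f k - R f k)
     \<le> diff_const * wl2_norm (Hneg_wt True m) (\<lambda>k. X k - W k) * wl2_norm L2_wt f"
  by (rule near_res_sol_close[OF _ resolvent_res_sol[OF near_resolvent_set]])

lemma near_opnorm_diff_bounds:
  "0 \<le> opnorm_diff pl (resolvent pl m X lam) R"
  "opnorm_diff pl (resolvent pl m X lam) R \<le> diff_const * wl2_norm (Hneg_wt True m) (\<lambda>k. X k - W k)"
  using opnorm_diff_bounds[OF _ near_resolvent_close] diff_const_nonneg wl2_norm_nonneg[OF Hneg_wt_nonneg]
  by (simp_all add: mult_ac)

end

lemma eventually_near:
  assumes V: "\<And>n. wl2 (Hneg_wt True m) (V n)" and "\<delta> > 0"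
    and lim: "(\<lambda>n. wl2_norm (Hneg_wt True m) (\<lambda>k. V n k - W k)) \<longlonglongrightarrow> 0"
  shows "\<forall>\<^sub>F n in sequentially. near (V n) \<and> lip_const * wl2_norm (Hneg_wt True m) (\<lambda>k. V n k - W k) \<le> 1/2"
proof -
  have "\<forall>\<^sub>F n in sequentially. wl2_norm (Hneg_wt True m) (\<lambda>k. V n k - W k) < min \<delta> (1 / (2 * lip_const + 1))"
    using lip_const_nonneg \<open>\<delta> > 0\<close> by (intro order_tendstoD(2)[OF lim]) simp
  then show ?thesis
  proof eventually_elim
    case (elim n)
    then have "lip_const * wl2_norm (Hneg_wt True m) (\<lambda>k. V n k - W k) \<le> lip_const * (1 / (2 * lip_const + 1))"
      using lip_const_nonneg by (intro mult_left_mono) simp_all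
    also have "\<dots> \<le> 1/2" using lip_const_nonneg by (simp add: field_simps)
    finally show ?case using elim V by (simp add: near_def)
  qed
qed

end

text \<open>The tolerance \<open>\<delta>\<close> determines the truncation set \<open>F0\<close>, which in turn determines the shift \<open>\<mu>\<close>.\<close>

lemma resolvent_setting_exists:
  assumes m: "m \<ge> 1" and W: "wl2 (Hneg_wt True m) W" and lam: "lam \<in> resolvent_set pl m W"
  obtains F0 \<delta> \<mu> where "\<delta> > 0" "resolvent_setting pl m W F0 \<delta> \<mu> lam"
proof -
  define a where "a = 4 ^ m * mult_const m"
  have "a \<ge> 0" by (simp add: a_def mult_const_nonneg)
  define \<delta> where "\<delta> = 1 / (8 * a + 1)"
  have "\<delta> > 0" using \<open>a \<ge> 0\<close> by (simp add: \<delta>_def)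
  have \<delta>_small: "4 ^ m * mult_const m * (2 * \<delta>) \<le> 1/4"
  proof -
    have "4 ^ m * mult_const m * (2 * \<delta>) = 2 * a / (8 * a + 1)" by (simp add: \<delta>_def a_def)
    also have "\<dots> \<le> 1/4" using \<open>a \<ge> 0\<close> by (simp add: divide_le_eq)
    finally show ?thesis .
  qed
  obtain F0 where F0: "finite F0" and tail: "wl2_norm (Hneg_wt True m) (\<lambda>k. W k - truncate F0 W k) \<le> \<delta>"
    using wl2_truncate_tail_small[OF Hneg_wt_nonneg W \<open>\<delta> > 0\<close>] by blast
  define L where "L = (\<Sum>k\<in>F0. cmod (W k))"
  have "L \<ge> 0" by (simp add: L_def sum_nonneg)
  define \<mu> where "\<mu> = max 1 ((4 * 2 ^ m * L)\<^sup>2)"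
  have "\<mu> \<ge> 1" by (simp add: \<mu>_def)
  have "4 * 2 ^ m * L \<le> sqrt \<mu>"
    using real_sqrt_le_mono[of "(4 * 2 ^ m * L)\<^sup>2" \<mu>] \<open>L \<ge> 0\<close> by (simp add: \<mu>_def)
  then have \<mu>_large: "2 ^ m / sqrt \<mu> * L \<le> 1/4"
    using \<open>\<mu> \<ge> 1\<close> by (simp add: field_simps)
  have "resolvent_setting pl m W F0 \<delta> \<mu> lam"
    by unfold_locales (use m W F0 \<delta>_small tail \<open>\<mu> \<ge> 1\<close> \<mu>_large lam \<open>\<delta> > 0\<close> in \<open>simp_all add: L_def\<close>)
  with \<open>\<delta> > 0\<close> show ?thesis by (rule that)
qed

theorem theorem5:
  fixes m :: nat and V :: "nat \<Rightarrow> int \<Rightarrow> complex" and W :: "int \<Rightarrow> complex"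
    and pl :: bool and lam :: complex
  assumes "m \<ge> 1"
    and "\<forall>n. in_H True (- real m) (V n)"
    and "in_H True (- real m) W"
    and "(\<lambda>n. Hnorm True (- real m) (\<lambda>k. V n k - W k)) \<longlonglongrightarrow> 0"
    and "lam \<in> resolvent_set pl m W"
  shows "(\<forall>\<^sub>F n in sequentially. lam \<in> resolvent_set pl m (V n)) \<and>
         (\<lambda>n. opnorm_diff pl (resolvent pl m (V n) lam) (resolvent pl m W lam)) \<longlonglongrightarrow> 0"
proof -
  have W: "wl2 (Hneg_wt True m) W" and V: "\<And>n. wl2 (Hneg_wt True m) (V n)"
    and e: "(\<lambda>n. wl2_norm (Hneg_wt True m) (\<lambda>k. V n k - W k)) \<longlonglongrightarrow> 0"
    using assms(2-4) by (simp_all add: in_H_neg_nat)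
  obtain F0 \<delta> \<mu> where "\<delta> > 0" and "resolvent_setting pl m W F0 \<delta> \<mu> lam"
    using resolvent_setting_exists[OF assms(1) W assms(5)] by blast
  then interpret resolvent_setting pl m W F0 \<delta> \<mu> lam by simp
  note close = eventually_near[OF V \<open>\<delta> > 0\<close> e]
  have "\<forall>\<^sub>F n in sequentially. lam \<in> resolvent_set pl m (V n)"
    using close by eventually_elim (simp add: near_resolvent_set)
  moreover have "(\<lambda>n. opnorm_diff pl (resolvent pl m (V n) lam) R) \<longlonglongrightarrow> 0"
  proof (rule tendsto_sandwich[OF _ _ tendsto_const tendsto_mult_right_zero[OF e, of diff_const]])
    show "\<forall>\<^sub>F n in sequentially. 0 \<le> opnorm_diff pl (resolvent pl m (V n) lam) R"
      using close by eventually_elim (simp add: near_opnorm_diff_bounds)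
    show "\<forall>\<^sub>F n in sequentially. opnorm_diff pl (resolvent pl m (V n) lam) R
        \<le> diff_const * wl2_norm (Hneg_wt True m) (\<lambda>k. V n k - W k)"
      using close by eventually_elim (simp add: near_opnorm_diff_bounds)
  qed
  ultimately show ?thesis by simp
qed

end
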